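(* Let $m,n\geq 2$. Then: (i) If $\hat g_{\text{inv}}:\mathbb{C}^{m\times n}\to\mathbb{C}^{n\times m}$ is any function with $\sup_{A\in\mathbb{C}^{m\times n},\,\|A\|_F\le\sqrt2}\|A^\dagger-\hat g_{\text{inv}}(A)\|_F<\infty$, then $\hat g_{\text{inv}}$ is not Banach-Mazur computable. (ii) If $\hat g_{\text{norm}}:\mathbb{C}^{m\times n}\to\mathbb{R}$ is any function with $\sup_{A\in\mathbb{C}^{m\times n},\,\|A\|_F\le\sqrt2}\big|\|A^\dagger\|_F-\hat g_{\text{norm}}(A)\big|<\infty$, then $\hat g_{\text{norm}}$ is not Banach-Mazur computable. (iii) If $\hat\Psi_{\text{lsq}}:\mathbb{C}^{m\times n}\times\mathbb{C}^m\to\mathbb{R}$ is any function with $\sup_{(A,b):\,\|A\|_F\le\sqrt2,\ \|b\|_2\le\sqrt2}\big|\min_{x\in\mathbb{C}^n}\|Ax-b\|_2-\hat\Psi_{\text{lsq}}(A,b)\big|<\tfrac14$, then $\hat\Psi_{\text{lsq}}$ is not Banach-Mazur computable. (iv) If $\hat\Psi_{\text{sol}}:\mathbb{C}^{m\times n}\times\mathbb{C}^m\to\mathbb{C}^n$ is any function with $\sup_{(A,b):\,\|A\|_F\le\sqrt2,\ \|b\|_2\le\sqrt2}\|A^\dagger b-\hat\Psi_{\text{sol}}(A,b)\|_2<\infty$, then $\hat\Psi_{\text{sol}}$ is not Banach-Mazur computable. (v) If $\hat\Psi_{\text{norm}}:\mathbb{C}^{m\times n}\times\mathbb{C}^m\to\mathbb{R}$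 is any function with $\sup_{(A,b):\,\|A\|_F\le\sqrt2,\ \|b\|_2\le\sqrt2}\big|\|A^\dagger b\|_2-\hat\Psi_{\text{norm}}(A,b)\big|<\infty$, then $\hat\Psi_{\text{norm}}$ is not Banach-Mazur computable. (vi) If $\hat\kappa:\mathbb{C}^{m\times n}\to\mathbb{R}$ is any function with $\sup_{A\in\mathbb{C}^{m\times n},\,\|A\|_F\le\sqrt2}\big|\|A\|_F\|A^\dagger\|_F-\hat\kappa(A)\big|<\infty$, then $\hat\kappa$ is not Banach-Mazur computable.
   Context: For $A\in\mathbb{C}^{m\times n}$, $A^\dagger\in\mathbb{C}^{n\times m}$ denotes the Moore–Penrose pseudoinverse (the unique matrix with $AA^\dagger A=A$, $A^\dagger AA^\dagger=A^\dagger$, $(AA^\dagger)^H=AA^\dagger$, $(A^\dagger A)^H=A^\dagger A$); $A^\dagger b$ is the minimal-Euclidean-norm minimizer of $\|Ax-b\|_2$. $\|\cdot\|_F$ is the Frobenius norm and $\|\cdot\|_2$ the Euclidean norm. Computability notions: a sequence $(r_k)\subset\mathbb{Q}$ is computable if $r_k=(-1)^{s(k)}a(k)/b(k)$ for recursive $a,b,s:\mathbb{N}\to\mathbb{N}$, $b(k)\ne0$ (analogously for multi-indexed sequences). A real $x$ is computable if there is a computable rational sequence $(r_k)$ with $|r_k-x|\le 2^{-k}$ for all $k$. A real sequence $(x_n)$ is computable if there is a computable rational double sequence $(r_{n,k})$ with $|r_{n,k}-x_n|\le2^{-k}$ for all $n,k$. Complex numbers, vectors, matrices and sequences thereof are computable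 if all real and imaginary parts of all entries are. A function defined on computable inputs is Banach-Mazur computable if it maps every computable sequence of inputs to a computable sequence of outputs (for complex-valued functions: the real and imaginary parts do). *)

theory Defs
  imports "HOL-Analysis.Analysis"
begin

datatype recf = RZero | RSucc | RProj nat | RComp recf "recf list" | RPrim recf recf | RMn recf

inductive eval_rec :: "recf \<Rightarrow> nat list \<Rightarrow> nat \<Rightarrow> bool" where
  ev_zero: "eval_rec RZero xs 0"
| ev_succ: "eval_rec RSucc (x # xs) (Suc x)"
| ev_proj: "i < length xs \<Longrightarrow> eval_rec (RProj i) xs (xs ! i)"
| ev_comp: "list_all2 (\<lambda>g y. eval_rec g xs y) gs ys \<Longrightarrow> eval_rec f ys z \<Longrightarrow> eval_rec (RComp f gs) xs z"
| ev_prim0: "eval_rec f xs y \<Longrightarrow> eval_rec (RPrim f g) (0 # xs) y"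
| ev_primS: "eval_rec (RPrim f g) (n # xs) y \<Longrightarrow> eval_rec g (y # n # xs) z
             \<Longrightarrow> eval_rec (RPrim f g) (Suc n # xs) z"
| ev_mn: "eval_rec f (y # xs) 0 \<Longrightarrow> (\<forall>z<y. \<exists>v. v > 0 \<and> eval_rec f (z # xs) v)
             \<Longrightarrow> eval_rec (RMn f) xs y"

definition recursive1 :: "(nat \<Rightarrow> nat) \<Rightarrow> bool" where
  "recursive1 f \<longleftrightarrow> (\<exists>c. \<forall>x. eval_rec c [x] (f x))"

definition recursive2 :: "(nat \<Rightarrow> nat \<Rightarrow> nat) \<Rightarrow> bool" where
  "recursive2 f \<longleftrightarrow> (\<exists>c. \<forall>x y. eval_rec c [x, y] (f x y))"

definition computable_rat_seq :: "(nat \<Rightarrow> rat) \<Rightarrow> bool" where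
  "computable_rat_seq r \<longleftrightarrow> (\<exists>a b s. recursive1 a \<and> recursive1 b \<and> recursive1 s \<and>
     (\<forall>k. b k \<noteq> 0 \<and> r k = (-1) ^ (s k) * of_nat (a k) / of_nat (b k)))"

definition computable_rat_dseq :: "(nat \<Rightarrow> nat \<Rightarrow> rat) \<Rightarrow> bool" where
  "computable_rat_dseq r \<longleftrightarrow> (\<exists>a b s. recursive2 a \<and> recursive2 b \<and> recursive2 s \<and>
     (\<forall>n k. b n k \<noteq> 0 \<and> r n k = (-1) ^ (s n k) * of_nat (a n k) / of_nat (b n k)))"

definition computable_real :: "real \<Rightarrow> bool" where
  "computable_real x \<longleftrightarrow> (\<exists>r. computable_rat_seq r \<and> (\<forall>k. \<bar>of_rat (r k) - x\<bar> \<le> (1/2) ^ k))"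

definition computable_real_seq :: "(nat \<Rightarrow> real) \<Rightarrow> bool" where
  "computable_real_seq x \<longleftrightarrow>
     (\<exists>r. computable_rat_dseq r \<and> (\<forall>n k. \<bar>of_rat (r n k) - x n\<bar> \<le> (1/2) ^ k))"

definition computable_complex_seq :: "(nat \<Rightarrow> complex) \<Rightarrow> bool" where
  "computable_complex_seq z \<longleftrightarrow>
     computable_real_seq (\<lambda>n. Re (z n)) \<and> computable_real_seq (\<lambda>n. Im (z n))"

definition computable_vec_seq :: "(nat \<Rightarrow> complex ^ 'n) \<Rightarrow> bool" where
  "computable_vec_seq v \<longleftrightarrow> (\<forall>i. computable_complex_seq (\<lambda>k. v k $ i))"

definition computable_mat_seq :: "(nat \<Rightarrow> complex ^ 'n ^ 'm) \<Rightarrow> bool" where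
  "computable_mat_seq A \<longleftrightarrow> (\<forall>i j. computable_complex_seq (\<lambda>k. A k $ i $ j))"

definition BM_computable_mat_mat :: "(complex ^ 'n ^ 'm \<Rightarrow> complex ^ 'p ^ 'q) \<Rightarrow> bool" where
  "BM_computable_mat_mat g \<longleftrightarrow> (\<forall>A. computable_mat_seq A \<longrightarrow> computable_mat_seq (\<lambda>k. g (A k)))"

definition BM_computable_mat_real :: "(complex ^ 'n ^ 'm \<Rightarrow> real) \<Rightarrow> bool" where
  "BM_computable_mat_real g \<longleftrightarrow> (\<forall>A. computable_mat_seq A \<longrightarrow> computable_real_seq (\<lambda>k. g (A k)))"

definition BM_computable_matvec_real :: "(complex ^ 'n ^ 'm \<Rightarrow> complex ^ 'm \<Rightarrow> real) \<Rightarrow> bool" where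
  "BM_computable_matvec_real g \<longleftrightarrow> (\<forall>A b. computable_mat_seq A \<longrightarrow> computable_vec_seq b \<longrightarrow>
      computable_real_seq (\<lambda>k. g (A k) (b k)))"

definition BM_computable_matvec_vec :: "(complex ^ 'n ^ 'm \<Rightarrow> complex ^ 'm \<Rightarrow> complex ^ 'p) \<Rightarrow> bool" where
  "BM_computable_matvec_vec g \<longleftrightarrow> (\<forall>A b. computable_mat_seq A \<longrightarrow> computable_vec_seq b \<longrightarrow>
      computable_vec_seq (\<lambda>k. g (A k) (b k)))"

definition cadjoint :: "complex ^ 'n ^ 'm \<Rightarrow> complex ^ 'm ^ 'n" where
  "cadjoint A = (\<chi> i j. cnj (A $ j $ i))"

definition frob_norm :: "complex ^ 'n ^ 'm \<Rightarrow> real" where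
  "frob_norm A = sqrt (\<Sum>i\<in>UNIV. \<Sum>j\<in>UNIV. (cmod (A $ i $ j))\<^sup>2)"

definition pinv :: "complex ^ 'n ^ 'm \<Rightarrow> complex ^ 'm ^ 'n" where
  "pinv A = (THE X. A ** X ** A = A \<and> X ** A ** X = X \<and>
                    cadjoint (A ** X) = A ** X \<and> cadjoint (X ** A) = X ** A)"

end

(* Let x_k = 2^(-T k) / M if the k-th program halts on its own code, after T k steps,
   and x_k = 0 otherwise.  (x_k) is a computable sequence of reals, but its zero set, the
   complement of the halting set, is not recursive.  The matrix A_k with entries 1 and x_k in
   two different rows and columns has Frobenius norm at most sqrt 2, and its pseudoinverse has
   entries 1 and 1/x_k (with 1/0 = 0).  So on A_k, or on (A_k, e) for a unit vector e, each of
   the six quantities is at least M for halting k and at most 1 otherwise; the least-squares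
   residual is 0 resp. 1.  A Banach-Mazur computable approximation within a fixed error therefore
   yields a computable real sequence separating the halting set from its complement by a gap,
   and comparing rational approximations with a dyadic threshold inside the gap would decide the
   halting problem.

   The undecidability of halting is proved for eval_rec itself: programs are coded by numbers,
   and "p halts on input p" is witnessed by a finite certificate, a set of evaluation judgements
   each following by one rule of eval_rec from the others.  Checking a certificate is recursive,
   so the usual diagonal argument applies. *)

theory Submission
  imports Defs "HOL-Library.Nat_Bijection"
begin

section \<open>Closure properties of recursive functions\<close>

text \<open>An \<open>n\<close>-ary function is given by its values on an environment \<open>e\<close>, of which only
  \<open>e 0, \<dots>, e (n - 1)\<close> are meaningful.\<close>

definition rec_fn :: "nat \<Rightarrow> ((nat \<Rightarrow> nat) \<Rightarrow> nat) \<Rightarrow> bool" where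
  "rec_fn n F \<longleftrightarrow> (\<exists>c. \<forall>xs. length xs = n \<longrightarrow> eval_rec c xs (F (nth xs)))"

definition rec_pred :: "nat \<Rightarrow> ((nat \<Rightarrow> nat) \<Rightarrow> bool) \<Rightarrow> bool" where
  "rec_pred n P \<longleftrightarrow> rec_fn n (\<lambda>e. if P e then 1 else 0)"

lemma rec_fn_cong:
  "rec_fn n F \<Longrightarrow> (\<And>xs. length xs = n \<Longrightarrow> F (nth xs) = G (nth xs)) \<Longrightarrow> rec_fn n G"
  unfolding rec_fn_def by metis

lemma rec_fn_const: "rec_fn n (\<lambda>e. k)"
proof -
  define c where "c = ((\<lambda>r. RComp RSucc [r]) ^^ k) RZero"
  have "eval_rec c xs k" for xs
    unfolding c_def by (induction k) (auto intro: eval_rec.intros)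
  then show ?thesis unfolding rec_fn_def by blast
qed

lemma rec_fn_proj: "i < n \<Longrightarrow> rec_fn n (\<lambda>e. e i)"
  unfolding rec_fn_def by (auto intro: exI[of _ "RProj i"] eval_rec.intros)

lemma rec_fn_Suc: "rec_fn 1 (\<lambda>e. Suc (e 0))"
  unfolding rec_fn_def
  by (rule exI[of _ RSucc]) (auto simp: length_Suc_conv intro: eval_rec.intros)

lemma rec_fn_comp:
  assumes F: "rec_fn (length Gs) F" and Gs: "\<And>G. G \<in> set Gs \<Longrightarrow> rec_fn n G"
  shows "rec_fn n (\<lambda>e. F (nth (map (\<lambda>G. G e) Gs)))"
proof -
  obtain cf where cf: "\<And>ys. length ys = length Gs \<Longrightarrow> eval_rec cf ys (F (nth ys))"
    using F unfolding rec_fn_def by blast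
  obtain cg where cg: "\<And>G xs. G \<in> set Gs \<Longrightarrow> length xs = n \<Longrightarrow> eval_rec (cg G) xs (G (nth xs))"
    using Gs unfolding rec_fn_def by metis
  have "eval_rec (RComp cf (map cg Gs)) xs (F (nth (map (\<lambda>G. G (nth xs)) Gs)))"
    if "length xs = n" for xs
    using cf cg that
    by (intro ev_comp[where ys="map (\<lambda>G. G (nth xs)) Gs"]) (auto simp: list_all2_conv_all_nth)
  then show ?thesis unfolding rec_fn_def by blast
qed

lemma rec_fn_comp1:
  "rec_fn 1 (\<lambda>e. f (e 0)) \<Longrightarrow> rec_fn n G \<Longrightarrow> rec_fn n (\<lambda>e. f (G e))"
  using rec_fn_comp[of "[G]" "\<lambda>e. f (e 0)" n] by simp

lemma rec_fn_comp2:
  "rec_fn 2 (\<lambda>e. f (e 0) (e 1)) \<Longrightarrow> rec_fn n G \<Longrightarrow> rec_fn n H \<Longrightarrow> rec_fn n (\<lambda>e. f (G e) (H e))"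
  using rec_fn_comp[of "[G, H]" "\<lambda>e. f (e 0) (e 1)" n] by (auto simp: numeral_2_eq_2)

lemma rec_fn_primrec:
  assumes F: "rec_fn n F" and G: "rec_fn (Suc (Suc n)) (\<lambda>e. G (e 0) (e 1) (\<lambda>j. e (Suc (Suc j))))"
    and H_0: "\<And>e. H 0 e = F e" and H_Suc: "\<And>m e. H (Suc m) e = G (H m e) m e"
  shows "rec_fn (Suc n) (\<lambda>e. H (e 0) (\<lambda>j. e (Suc j)))"
proof -
  obtain cf where cf: "\<And>xs. length xs = n \<Longrightarrow> eval_rec cf xs (F (nth xs))"
    using F unfolding rec_fn_def by blast
  obtain cg where cg: "\<And>xs. length xs = Suc (Suc n) \<Longrightarrow>
      eval_rec cg xs (G (xs ! 0) (xs ! 1) (\<lambda>j. xs ! Suc (Suc j)))"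
    using G unfolding rec_fn_def by blast
  have "eval_rec (RPrim cf cg) (m # xs) (H m (nth xs))" if "length xs = n" for m xs
  proof (induction m)
    case 0
    then show ?case using cf[OF that] by (simp add: H_0 ev_prim0)
  next
    case (Suc m)
    then show ?case using cg[of "H m (nth xs) # m # xs"] that by (auto simp: H_Suc intro: ev_primS)
  qed
  then show ?thesis
    unfolding rec_fn_def by (intro exI[of _ "RPrim cf cg"]) (auto simp: length_Suc_conv)
qed

lemma rec_fn_app_first:
  assumes K: "rec_fn (Suc n) (\<lambda>e. K (e 0) (\<lambda>j. e (Suc j)))" and B: "rec_fn n B"
  shows "rec_fn n (\<lambda>e. K (B e) e)"
proof -
  obtain ck where ck: "\<And>xs. length xs = Suc n \<Longrightarrow> eval_rec ck xs (K (xs ! 0) (\<lambda>j. xs ! Suc j))"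
    using K unfolding rec_fn_def by blast
  obtain cb where cb: "\<And>xs. length xs = n \<Longrightarrow> eval_rec cb xs (B (nth xs))"
    using B unfolding rec_fn_def by blast
  have "eval_rec (RComp ck (cb # map RProj [0..<n])) xs (K (B (nth xs)) (nth xs))"
    if "length xs = n" for xs
    using ck[of "B (nth xs) # xs"] cb that
    by (intro ev_comp[where ys="B (nth xs) # xs"]) (auto simp: list_all2_conv_all_nth nth_Cons' intro: ev_proj)
  then show ?thesis unfolding rec_fn_def by blast
qed

lemma rec_fn_shift:
  assumes "rec_fn n F"
  shows "rec_fn (Suc n) (\<lambda>e. F (\<lambda>j. e (Suc j)))"
proof (rule rec_fn_cong)
  show "rec_fn (Suc n) (\<lambda>e. F (nth (map (\<lambda>G. G e) (map (\<lambda>i e. e (Suc i)) [0..<n]))))"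
    using assms by (intro rec_fn_comp) (auto intro: rec_fn_proj)
  show "F (nth (map (\<lambda>G. G (nth xs)) (map (\<lambda>i e. e (Suc i)) [0..<n]))) = F (\<lambda>j. xs ! Suc j)"
    if "length xs = Suc n" for xs
    using that by (auto simp: length_Suc_conv comp_def map_nth)
qed

lemma rec_fn_add: "rec_fn n F \<Longrightarrow> rec_fn n G \<Longrightarrow> rec_fn n (\<lambda>e. F e + G e)"
proof -
  have "rec_fn 3 (\<lambda>e. Suc (e 0))"
    using rec_fn_comp1[OF rec_fn_Suc rec_fn_proj[of 0 3]] by simp
  then have "rec_fn (Suc (Suc 0)) (\<lambda>e. e 0 + e 1)"
    using rec_fn_primrec[where n=1 and H="\<lambda>m e. m + e 0" and G="\<lambda>acc m e. Suc acc", OF rec_fn_proj[of 0]]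
    by (simp add: numeral_3_eq_3)
  then show "rec_fn n F \<Longrightarrow> rec_fn n G \<Longrightarrow> rec_fn n (\<lambda>e. F e + G e)"
    using rec_fn_comp2 by (simp add: numeral_2_eq_2)
qed

lemma rec_fn_mult: "rec_fn n F \<Longrightarrow> rec_fn n G \<Longrightarrow> rec_fn n (\<lambda>e. F e * G e)"
proof -
  have "rec_fn 3 (\<lambda>e. e 0 + e 2)"
    by (intro rec_fn_add rec_fn_proj) simp_all
  then have "rec_fn (Suc (Suc 0)) (\<lambda>e. e 0 * e 1)"
    using rec_fn_primrec[where n=1 and H="\<lambda>m e. m * e 0" and G="\<lambda>acc m e. acc + e 0", OF rec_fn_const]
    by (simp add: numeral_3_eq_3 numeral_2_eq_2)
  then show "rec_fn n F \<Longrightarrow> rec_fn n G \<Longrightarrow> rec_fn n (\<lambda>e. F e * G e)"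
    using rec_fn_comp2 by (simp add: numeral_2_eq_2)
qed

lemma rec_fn_diff: "rec_fn n F \<Longrightarrow> rec_fn n G \<Longrightarrow> rec_fn n (\<lambda>e. F e - G e)"
proof -
  have "rec_fn (Suc 0) (\<lambda>e. e 0 - 1)"
    using rec_fn_primrec[where n=0 and H="\<lambda>m e. m - 1", OF rec_fn_const rec_fn_proj[of 1]] by simp
  then have "rec_fn 3 (\<lambda>e. e 0 - 1)"
    using rec_fn_comp1[OF _ rec_fn_proj[of 0 3]] by simp
  then have "rec_fn (Suc (Suc 0)) (\<lambda>e. e 1 - e 0)"
    using rec_fn_primrec[where n=1 and H="\<lambda>m e. e 0 - m", OF rec_fn_proj[of 0]]
    by (simp add: numeral_3_eq_3)
  then show "rec_fn n F \<Longrightarrow> rec_fn n G \<Longrightarrow> rec_fn n (\<lambda>e. F e - G e)"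
    using rec_fn_comp2[where f="\<lambda>a b. b - a"] by (simp add: numeral_2_eq_2)
qed

lemma rec_fn_power: "rec_fn n F \<Longrightarrow> rec_fn n G \<Longrightarrow> rec_fn n (\<lambda>e. F e ^ G e)"
proof -
  have "rec_fn 3 (\<lambda>e. e 0 * e 2)"
    by (intro rec_fn_mult rec_fn_proj) simp_all
  then have "rec_fn (Suc (Suc 0)) (\<lambda>e. e 1 ^ e 0)"
    using rec_fn_primrec[where n=1 and H="\<lambda>m e. e 0 ^ m" and G="\<lambda>acc m e. acc * e 0", OF rec_fn_const]
    by (simp add: numeral_3_eq_3 numeral_2_eq_2)
  then show "rec_fn n F \<Longrightarrow> rec_fn n G \<Longrightarrow> rec_fn n (\<lambda>e. F e ^ G e)"
    using rec_fn_comp2[where f="\<lambda>a b. b ^ a"] by (simp add: numeral_2_eq_2)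
qed

lemma rec_fn_sum:
  assumes "rec_fn (Suc n) (\<lambda>e. F (e 0) (\<lambda>j. e (Suc j)))" and "rec_fn n B"
  shows "rec_fn n (\<lambda>e. \<Sum>i<B e. F i e)"
proof -
  have "rec_fn (Suc (Suc n)) (\<lambda>e. e 0 + F (e 1) (\<lambda>j. e (Suc (Suc j))))"
    using rec_fn_add[OF rec_fn_proj[of 0] rec_fn_shift[OF assms(1)]] by simp
  then have "rec_fn (Suc n) (\<lambda>e. \<Sum>i<e 0. F i (\<lambda>j. e (Suc j)))"
    using rec_fn_primrec[where H="\<lambda>m e. \<Sum>i<m. F i e", OF rec_fn_const] by simp
  then show ?thesis
    using rec_fn_app_first[where K="\<lambda>m e. \<Sum>i<m. F i e", OF _ assms(2)] by simp
qed

lemma rec_pred_eq_0: "rec_pred 1 (\<lambda>e. e 0 = 0)"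
  unfolding rec_pred_def
  using rec_fn_primrec[where n=0 and H="\<lambda>m e. if m = 0 then 1 else 0", OF rec_fn_const rec_fn_const]
  by simp

lemma rec_pred_cong:
  "rec_pred n P \<Longrightarrow> (\<And>xs. length xs = n \<Longrightarrow> P (nth xs) = Q (nth xs)) \<Longrightarrow> rec_pred n Q"
  unfolding rec_pred_def by (erule rec_fn_cong) simp

lemma rec_pred_comp:
  "rec_pred (length Gs) P \<Longrightarrow> (\<And>G. G \<in> set Gs \<Longrightarrow> rec_fn n G) \<Longrightarrow>
    rec_pred n (\<lambda>e. P (nth (map (\<lambda>G. G e) Gs)))"
  unfolding rec_pred_def by (rule rec_fn_comp)

lemma rec_pred_comp1: "rec_pred 1 (\<lambda>e. P (e 0)) \<Longrightarrow> rec_fn n F \<Longrightarrow> rec_pred n (\<lambda>e. P (F e))"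
  unfolding rec_pred_def by (rule rec_fn_comp1[where f="\<lambda>a. if P a then 1 else 0"])

lemma rec_pred_comp2:
  "rec_pred 2 (\<lambda>e. P (e 0) (e 1)) \<Longrightarrow> rec_fn n F \<Longrightarrow> rec_fn n G \<Longrightarrow> rec_pred n (\<lambda>e. P (F e) (G e))"
  unfolding rec_pred_def by (rule rec_fn_comp2[where f="\<lambda>a b. if P a b then 1 else 0"])

lemma rec_pred_Not: "rec_pred n P \<Longrightarrow> rec_pred n (\<lambda>e. \<not> P e)"
  unfolding rec_pred_def
  by (drule rec_fn_diff[OF rec_fn_const[of n 1]]) (erule rec_fn_cong, simp)

lemma rec_pred_conj: "rec_pred n P \<Longrightarrow> rec_pred n Q \<Longrightarrow> rec_pred n (\<lambda>e. P e \<and> Q e)"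
  unfolding rec_pred_def by (drule (1) rec_fn_mult) (erule rec_fn_cong, simp)

lemma rec_pred_disj: "rec_pred n P \<Longrightarrow> rec_pred n Q \<Longrightarrow> rec_pred n (\<lambda>e. P e \<or> Q e)"
  using rec_pred_Not[OF rec_pred_conj[OF rec_pred_Not rec_pred_Not]] by simp

lemma rec_pred_imp: "rec_pred n P \<Longrightarrow> rec_pred n Q \<Longrightarrow> rec_pred n (\<lambda>e. P e \<longrightarrow> Q e)"
  using rec_pred_disj[OF rec_pred_Not] by simp

lemma rec_pred_le: "rec_fn n F \<Longrightarrow> rec_fn n G \<Longrightarrow> rec_pred n (\<lambda>e. F e \<le> G e)"
  using rec_pred_comp1[OF rec_pred_eq_0 rec_fn_diff] by simp

lemma rec_pred_less: "rec_fn n F \<Longrightarrow> rec_fn n G \<Longrightarrow> rec_pred n (\<lambda>e. F e < G e)"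
  using rec_pred_Not[OF rec_pred_le] by (simp add: not_le)

lemma rec_pred_eq: "rec_fn n F \<Longrightarrow> rec_fn n G \<Longrightarrow> rec_pred n (\<lambda>e. F e = G e)"
  using rec_pred_conj[OF rec_pred_le rec_pred_le] by (simp add: order_eq_iff)

lemma rec_fn_If:
  assumes "rec_pred n P" "rec_fn n F" "rec_fn n G"
  shows "rec_fn n (\<lambda>e. if P e then F e else G e)"
proof -
  have "rec_fn n (\<lambda>e. (if P e then 1 else 0) * F e + (1 - (if P e then 1 else 0)) * G e)"
    using assms unfolding rec_pred_def by (intro rec_fn_add rec_fn_mult rec_fn_diff rec_fn_const)
  then show ?thesis by (rule rec_fn_cong) simp
qed

lemma rec_pred_ex_less:
  assumes "rec_pred (Suc n) (\<lambda>e. P (e 0) (\<lambda>j. e (Suc j)))" and "rec_fn n B"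
  shows "rec_pred n (\<lambda>e. \<exists>i<B e. P i e)"
proof -
  have "rec_fn n (\<lambda>e. \<Sum>i<B e. if P i e then 1 else 0)"
    using assms unfolding rec_pred_def by (rule rec_fn_sum)
  then have "rec_pred n (\<lambda>e. (\<Sum>i<B e. if P i e then 1 else 0) \<noteq> (0::nat))"
    by (intro rec_pred_Not rec_pred_eq rec_fn_const)
  then show ?thesis by (rule rec_pred_cong) (auto simp: lessThan_iff)
qed

lemma rec_pred_all_less:
  assumes "rec_pred (Suc n) (\<lambda>e. P (e 0) (\<lambda>j. e (Suc j)))" and "rec_fn n B"
  shows "rec_pred n (\<lambda>e. \<forall>i<B e. P i e)"
  using rec_pred_Not[OF rec_pred_ex_less[OF rec_pred_Not[OF assms(1)] assms(2)]] by simp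

lemmas rec_intros = rec_fn_const rec_fn_proj rec_fn_add rec_fn_mult rec_fn_diff rec_fn_power
  rec_fn_If rec_fn_sum rec_pred_Not rec_pred_conj rec_pred_disj rec_pred_imp rec_pred_le
  rec_pred_less rec_pred_eq rec_pred_ex_less rec_pred_all_less

section \<open>Coding pairs, lists and finite sets by natural numbers\<close>

definition npair :: "nat \<Rightarrow> nat \<Rightarrow> nat" where "npair a b = prod_encode (a, b)"
definition nfst :: "nat \<Rightarrow> nat" where "nfst n = fst (prod_decode n)"
definition nsnd :: "nat \<Rightarrow> nat" where "nsnd n = snd (prod_decode n)"

lemma nfst_npair [simp]: "nfst (npair a b) = a" and nsnd_npair [simp]: "nsnd (npair a b) = b"
  by (simp_all add: nfst_def nsnd_def npair_def)

lemma npair_nfst_nsnd [simp]: "npair (nfst n) (nsnd n) = n"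
  by (simp add: nfst_def nsnd_def npair_def)

lemma le_npair_left: "a \<le> npair a b" and le_npair_right: "b \<le> npair a b"
  by (simp_all add: npair_def le_prod_encode_1 le_prod_encode_2)

lemma nfst_le: "nfst n \<le> n" and nsnd_le: "nsnd n \<le> n"
  by (metis le_npair_left npair_nfst_nsnd, metis le_npair_right npair_nfst_nsnd)

lemma rec_fn_npair: "rec_fn n F \<Longrightarrow> rec_fn n G \<Longrightarrow> rec_fn n (\<lambda>e. npair (F e) (G e))"
proof -
  have "rec_fn 2 (\<lambda>e. e 0 + Suc (e 1))"
    by (intro rec_fn_add rec_fn_comp1[OF rec_fn_Suc] rec_fn_proj) simp_all
  then have triangle: "rec_fn 1 (\<lambda>e. triangle (e 0))"
    using rec_fn_primrec[where n=0 and H="\<lambda>m e. triangle m" and G="\<lambda>acc m e. acc + Suc m", OF rec_fn_const]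
    by (simp add: numeral_2_eq_2)
  have "rec_fn 2 (\<lambda>e. triangle (e 0 + e 1) + e 0)"
    by (intro rec_fn_add rec_fn_comp1[OF triangle] rec_fn_proj) simp_all
  then have "rec_fn 2 (\<lambda>e. npair (e 0) (e 1))"
    by (simp add: npair_def prod_encode_def)
  then show "rec_fn n F \<Longrightarrow> rec_fn n G \<Longrightarrow> rec_fn n (\<lambda>e. npair (F e) (G e))"
    by (rule rec_fn_comp2)
qed

lemma nfst_eq_sum: "nfst n = (\<Sum>a<Suc n. if \<exists>b<Suc n. npair a b = n then a else 0)"
proof -
  have "(\<exists>b<Suc n. npair a b = n) \<longleftrightarrow> a = nfst n" for a
    using nsnd_le[of n] by (metis less_Suc_eq_le nfst_npair npair_nfst_nsnd)
  then show ?thesis using nfst_le[of n] by simp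
qed

lemma nsnd_eq_sum: "nsnd n = (\<Sum>b<Suc n. if \<exists>a<Suc n. npair a b = n then b else 0)"
proof -
  have "(\<exists>a<Suc n. npair a b = n) \<longleftrightarrow> b = nsnd n" for b
    using nfst_le[of n] by (metis less_Suc_eq_le nsnd_npair npair_nfst_nsnd)
  then show ?thesis using nsnd_le[of n] by simp
qed

lemma rec_fn_nfst: "rec_fn n F \<Longrightarrow> rec_fn n (\<lambda>e. nfst (F e))"
proof -
  have "rec_fn 1 (\<lambda>e. \<Sum>a<Suc (e 0). if \<exists>b<Suc (e 0). npair a b = e 0 then a else 0)"
    by (intro rec_intros rec_fn_npair rec_fn_comp1[OF rec_fn_Suc]) simp_all
  then have "rec_fn 1 (\<lambda>e. nfst (e 0))" by (simp only: nfst_eq_sum)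
  then show "rec_fn n F \<Longrightarrow> rec_fn n (\<lambda>e. nfst (F e))" by (rule rec_fn_comp1)
qed

lemma rec_fn_nsnd: "rec_fn n F \<Longrightarrow> rec_fn n (\<lambda>e. nsnd (F e))"
proof -
  have "rec_fn 1 (\<lambda>e. \<Sum>b<Suc (e 0). if \<exists>a<Suc (e 0). npair a b = e 0 then b else 0)"
    by (intro rec_intros rec_fn_npair rec_fn_comp1[OF rec_fn_Suc]) simp_all
  then have "rec_fn 1 (\<lambda>e. nsnd (e 0))" by (simp only: nsnd_eq_sum)
  then show "rec_fn n F \<Longrightarrow> rec_fn n (\<lambda>e. nsnd (F e))" by (rule rec_fn_comp1)
qed

definition ncons :: "nat \<Rightarrow> nat \<Rightarrow> nat" where "ncons x L = Suc (npair x L)"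
definition nhd :: "nat \<Rightarrow> nat" where "nhd L = nfst (L - 1)"
definition ntl :: "nat \<Rightarrow> nat" where "ntl L = nsnd (L - 1)"
definition nnth :: "nat \<Rightarrow> nat \<Rightarrow> nat" where "nnth L i = nhd ((ntl ^^ i) L)"
definition nlength :: "nat \<Rightarrow> nat" where "nlength L = (\<Sum>i<L. if (ntl ^^ i) L = 0 then 0 else 1)"

lemma list_encode_Cons: "list_encode (x # xs) = ncons x (list_encode xs)"
  by (simp add: ncons_def npair_def)

declare list_encode.simps(2) [simp del]

lemma nhd_ncons [simp]: "nhd (ncons x L) = x" and ntl_ncons [simp]: "ntl (ncons x L) = L"
  by (simp_all add: nhd_def ntl_def ncons_def)

lemma ncons_neq_0 [simp]: "ncons x L \<noteq> 0"
  by (simp add: ncons_def)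

lemma ntl_0 [simp]: "ntl 0 = 0"
  using nsnd_le[of 0] by (simp add: ntl_def)

lemma list_encode_eq_0_iff: "list_encode xs = 0 \<longleftrightarrow> xs = []"
  by (cases xs) (auto simp: list_encode_Cons)

lemma funpow_ntl_list_encode: "(ntl ^^ i) (list_encode xs) = list_encode (drop i xs)"
proof (induction i)
  case (Suc i)
  have "ntl (list_encode ys) = list_encode (tl ys)" for ys
    by (cases ys) (auto simp: list_encode_Cons)
  then show ?case using Suc by (simp add: drop_Suc tl_drop)
qed simp

lemma nnth_list_encode: "i < length xs \<Longrightarrow> nnth (list_encode xs) i = xs ! i"
  by (simp add: nnth_def funpow_ntl_list_encode Cons_nth_drop_Suc[symmetric] list_encode_Cons)

lemma nlength_list_encode: "nlength (list_encode xs) = length xs"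
proof -
  have "length xs \<le> list_encode xs"
    by (induction xs) (auto simp: list_encode_Cons ncons_def intro: order.trans[OF _ le_npair_right])
  then have "(\<Sum>i<list_encode xs. if length xs \<le> i then 0 else 1) = (\<Sum>i<length xs. 1::nat)"
    by (intro sum.mono_neutral_cong_right) auto
  then show ?thesis
    by (simp add: nlength_def funpow_ntl_list_encode list_encode_eq_0_iff)
qed

lemma rec_fn_ncons: "rec_fn n F \<Longrightarrow> rec_fn n G \<Longrightarrow> rec_fn n (\<lambda>e. ncons (F e) (G e))"
  unfolding ncons_def by (intro rec_fn_comp1[OF rec_fn_Suc] rec_fn_npair)

lemma rec_fn_nhd: "rec_fn n F \<Longrightarrow> rec_fn n (\<lambda>e. nhd (F e))"
  unfolding nhd_def by (intro rec_fn_nfst rec_fn_diff rec_fn_const)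

lemma rec_fn_ntl: "rec_fn n F \<Longrightarrow> rec_fn n (\<lambda>e. ntl (F e))"
  unfolding ntl_def by (intro rec_fn_nsnd rec_fn_diff rec_fn_const)

lemma rec_fn_funpow_ntl: "rec_fn n F \<Longrightarrow> rec_fn n G \<Longrightarrow> rec_fn n (\<lambda>e. (ntl ^^ F e) (G e))"
proof -
  have "rec_fn 3 (\<lambda>e. ntl (e 0))"
    by (intro rec_fn_ntl rec_fn_proj) simp
  then have "rec_fn (Suc (Suc 0)) (\<lambda>e. (ntl ^^ e 0) (e 1))"
    using rec_fn_primrec[where n=1 and H="\<lambda>m e. (ntl ^^ m) (e 0)" and G="\<lambda>acc m e. ntl acc",
        OF rec_fn_proj[of 0]]
    by (simp add: numeral_3_eq_3)
  then show "rec_fn n F \<Longrightarrow> rec_fn n G \<Longrightarrow> rec_fn n (\<lambda>e. (ntl ^^ F e) (G e))"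
    using rec_fn_comp2[where f="\<lambda>a b. (ntl ^^ a) b"] by (simp add: numeral_2_eq_2)
qed

lemma rec_fn_nnth: "rec_fn n F \<Longrightarrow> rec_fn n G \<Longrightarrow> rec_fn n (\<lambda>e. nnth (F e) (G e))"
  unfolding nnth_def by (intro rec_fn_nhd rec_fn_funpow_ntl)

lemma rec_fn_nlength: "rec_fn n F \<Longrightarrow> rec_fn n (\<lambda>e. nlength (F e))"
proof -
  have "rec_fn 1 (\<lambda>e. \<Sum>i<e 0. if (ntl ^^ i) (e 0) = 0 then 0 else 1)"
    by (intro rec_intros rec_fn_funpow_ntl) simp_all
  then show "rec_fn n F \<Longrightarrow> rec_fn n (\<lambda>e. nlength (F e))"
    unfolding nlength_def by (rule rec_fn_comp1)
qed

lemma mem_set_decode_iff: "J \<in> set_decode S \<longleftrightarrow> (\<exists>q<Suc S. \<exists>r<2 ^ J. S = (2 * q + 1) * 2 ^ J + r)"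
proof
  assume "J \<in> set_decode S"
  then have "odd (S div 2 ^ J)" by (simp add: set_decode_def)
  then have "S = (2 * (S div 2 ^ J div 2) + 1) * 2 ^ J + S mod 2 ^ J"
    by (metis div_mult_mod_eq odd_two_times_div_two_succ)
  moreover have "S div 2 ^ J div 2 < Suc S"
    by (meson div_le_dividend le_imp_less_Suc order.trans)
  ultimately show "\<exists>q<Suc S. \<exists>r<2 ^ J. S = (2 * q + 1) * 2 ^ J + r"
    by (metis mod_less_divisor pos2 zero_less_power)
next
  assume "\<exists>q<Suc S. \<exists>r<2 ^ J. S = (2 * q + 1) * 2 ^ J + r"
  then obtain q r where "r < 2 ^ J" "S = r + (2 * q + 1) * 2 ^ J" by auto
  then have "S div 2 ^ J = 2 * q + 1"
    using div_mult_self1[of "2 ^ J" r "2 * q + 1"] by simp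
  then show "J \<in> set_decode S" by (simp add: set_decode_def)
qed

lemma less_of_mem_set_decode: "J \<in> set_decode S \<Longrightarrow> J < S"
  by (auto simp: mem_set_decode_iff intro: less_le_trans[OF less_exp])

lemma rec_pred_mem_set_decode:
  "rec_fn n F \<Longrightarrow> rec_fn n G \<Longrightarrow> rec_pred n (\<lambda>e. F e \<in> set_decode (G e))"
proof -
  have "rec_pred 2 (\<lambda>e. \<exists>q<Suc (e 1). \<exists>r<2 ^ e 0. e 1 = (2 * q + 1) * 2 ^ e 0 + r)"
    by (intro rec_intros rec_fn_comp1[OF rec_fn_Suc]) simp_all
  then show "rec_fn n F \<Longrightarrow> rec_fn n G \<Longrightarrow> rec_pred n (\<lambda>e. F e \<in> set_decode (G e))"
    unfolding mem_set_decode_iff[symmetric] by (rule rec_pred_comp2)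
qed

section \<open>Evaluation certificates and the halting problem\<close>

fun recf_code :: "recf \<Rightarrow> nat" where
  "recf_code RZero = npair 0 0"
| "recf_code RSucc = npair 1 0"
| "recf_code (RProj i) = npair 2 i"
| "recf_code (RComp f gs) = npair 3 (npair (recf_code f) (list_encode (map recf_code gs)))"
| "recf_code (RPrim f g) = npair 4 (npair (recf_code f) (recf_code g))"
| "recf_code (RMn f) = npair 5 (recf_code f)"

declare recf_code.simps [simp del]

definition judgement :: "nat \<Rightarrow> nat \<Rightarrow> nat \<Rightarrow> nat" where
  "judgement p L y = npair p (npair L y)"

lemma le_judgement_input: "L \<le> judgement p L y" and le_judgement_value: "y \<le> judgement p L y"
  unfolding judgement_def by (meson le_npair_left le_npair_right order.trans)+

text \<open>\<open>judgement p L y\<close> codes the claim that the program with code \<open>p\<close> maps the input list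
  with code \<open>L\<close> to \<open>y\<close>; \<open>justified M p L y\<close> says that this claim follows by one rule of
  \<^const>\<open>eval_rec\<close> from claims in \<open>M\<close>.\<close>

definition justified :: "(nat \<Rightarrow> bool) \<Rightarrow> nat \<Rightarrow> nat \<Rightarrow> nat \<Rightarrow> bool" where
  "justified M p L y \<longleftrightarrow>
     (nfst p = 0 \<and> y = 0) \<or>
     (nfst p = 1 \<and> L \<noteq> 0 \<and> y = Suc (nhd L)) \<or>
     (nfst p = 2 \<and> nsnd p < nlength L \<and> y = nnth L (nsnd p)) \<or>
     (nfst p = 3 \<and> (\<exists>L'. M (judgement (nfst (nsnd p)) L' y) \<and> nlength L' = nlength (nsnd (nsnd p)) \<and>
        (\<forall>k<nlength (nsnd (nsnd p)). M (judgement (nnth (nsnd (nsnd p)) k) L (nnth L' k))))) \<or>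
     (nfst p = 4 \<and> L \<noteq> 0 \<and> nhd L = 0 \<and> M (judgement (nfst (nsnd p)) (ntl L) y)) \<or>
     (nfst p = 4 \<and> L \<noteq> 0 \<and> nhd L \<noteq> 0 \<and>
        (\<exists>v. M (judgement p (ncons (nhd L - 1) (ntl L)) v) \<and>
           M (judgement (nsnd (nsnd p)) (ncons v (ncons (nhd L - 1) (ntl L))) y))) \<or>
     (nfst p = 5 \<and> M (judgement (nsnd p) (ncons y L) 0) \<and>
        (\<forall>z<y. \<exists>v. M (judgement (nsnd p) (ncons z L) v) \<and> v \<noteq> 0))"

lemma justified_mono: "justified M p L y \<Longrightarrow> (\<And>K. M K \<Longrightarrow> M' K) \<Longrightarrow> justified M' p L y"
  unfolding justified_def by (elim disjE) (simp_all, blast+)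

lemma justified_recf_code:
  "justified M (recf_code RZero) (list_encode xs) y \<longleftrightarrow> y = 0"
  "justified M (recf_code RSucc) (list_encode xs) y \<longleftrightarrow> xs \<noteq> [] \<and> y = Suc (hd xs)"
  "justified M (recf_code (RProj i)) (list_encode xs) y \<longleftrightarrow> i < length xs \<and> y = xs ! i"
  "justified M (recf_code (RComp f gs)) (list_encode xs) y \<longleftrightarrow>
     (\<exists>ys. length ys = length gs \<and> M (judgement (recf_code f) (list_encode ys) y) \<and>
       (\<forall>k<length gs. M (judgement (recf_code (gs ! k)) (list_encode xs) (ys ! k))))"
  "\<not> justified M (recf_code (RPrim f g)) 0 y"
  "justified M (recf_code (RPrim f g)) (list_encode (0 # xs)) y \<longleftrightarrow>
     M (judgement (recf_code f) (list_encode xs) y)"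
  "justified M (recf_code (RPrim f g)) (list_encode (Suc m # xs)) y \<longleftrightarrow>
     (\<exists>v. M (judgement (recf_code (RPrim f g)) (list_encode (m # xs)) v) \<and>
       M (judgement (recf_code g) (list_encode (v # m # xs)) y))"
  "justified M (recf_code (RMn f)) (list_encode xs) y \<longleftrightarrow>
     M (judgement (recf_code f) (list_encode (y # xs)) 0) \<and>
     (\<forall>z<y. \<exists>v. M (judgement (recf_code f) (list_encode (z # xs)) v) \<and> v \<noteq> 0)"
proof -
  show "justified M (recf_code (RComp f gs)) (list_encode xs) y \<longleftrightarrow>
     (\<exists>ys. length ys = length gs \<and> M (judgement (recf_code f) (list_encode ys) y) \<and>
       (\<forall>k<length gs. M (judgement (recf_code (gs ! k)) (list_encode xs) (ys ! k))))"
    unfolding justified_def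
    by (auto simp: recf_code.simps nlength_list_encode nnth_list_encode)
       (metis list_decode_inverse nlength_list_encode nnth_list_encode)
qed (auto simp: justified_def recf_code.simps list_encode_Cons list_encode_eq_0_iff nlength_list_encode
    nnth_list_encode neq_Nil_conv)

definition certificate :: "nat \<Rightarrow> bool" where
  "certificate S \<longleftrightarrow> (\<forall>J<S. J \<in> set_decode S \<longrightarrow>
     justified (\<lambda>K. K \<in> set_decode S) (nfst J) (nfst (nsnd J)) (nsnd (nsnd J)))"

lemma certificate_justified:
  assumes "certificate S" and J: "judgement p L y \<in> set_decode S"
  shows "justified (\<lambda>K. K \<in> set_decode S) p L y"
proof -
  have "justified (\<lambda>K. K \<in> set_decode S) (nfst (judgement p L y))
      (nfst (nsnd (judgement p L y))) (nsnd (nsnd (judgement p L y)))"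
    using assms less_of_mem_set_decode unfolding certificate_def by blast
  then show ?thesis by (simp add: judgement_def)
qed

lemma certificate_sound:
  assumes S: "certificate S"
  shows "judgement (recf_code f) (list_encode xs) y \<in> set_decode S \<Longrightarrow> eval_rec f xs y"
proof (induction f arbitrary: xs y)
  case RZero
  then show ?case using certificate_justified[OF S RZero.prems] by (simp add: justified_recf_code ev_zero)
next
  case RSucc
  then show ?case
    using certificate_justified[OF S RSucc.prems] by (auto simp: justified_recf_code neq_Nil_conv intro: ev_succ)
next
  case (RProj i)
  then show ?case using certificate_justified[OF S RProj.prems] by (simp add: justified_recf_code ev_proj)
next
  case (RComp f gs)
  then show ?case
    using certificate_justified[OF S RComp.prems]
    by (auto simp: justified_recf_code list_all2_conv_all_nth intro!: ev_comp)
next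
  case (RPrim f g)
  have "eval_rec (RPrim f g) (m # xs') z"
    if "judgement (recf_code (RPrim f g)) (list_encode (m # xs')) z \<in> set_decode S" for m xs' z
    using that
  proof (induction m arbitrary: z)
    case 0
    then show ?case
      using certificate_justified[OF S 0] RPrim.IH(1) by (simp add: justified_recf_code ev_prim0)
  next
    case (Suc m)
    then show ?case
      using certificate_justified[OF S Suc.prems] Suc.IH RPrim.IH(2)
      by (auto simp: justified_recf_code intro: ev_primS)
  qed
  then show ?case
    using RPrim.prems certificate_justified[OF S RPrim.prems] by (cases xs) (auto simp: justified_recf_code)
next
  case (RMn f)
  then have "judgement (recf_code f) (list_encode (y # xs)) 0 \<in> set_decode S"
    and "\<forall>z<y. \<exists>v. judgement (recf_code f) (list_encode (z # xs)) v \<in> set_decode S \<and> v \<noteq> 0"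
    using certificate_justified[OF S RMn.prems] by (simp_all add: justified_recf_code)
  then show ?case using RMn.IH by (blast intro: ev_mn)
qed

definition closed_judgements :: "nat set \<Rightarrow> bool" where
  "closed_judgements F \<longleftrightarrow>
     finite F \<and> (\<forall>J\<in>F. justified (\<lambda>K. K \<in> F) (nfst J) (nfst (nsnd J)) (nsnd (nsnd J)))"

lemma closed_judgements_UN:
  assumes "finite I" and "\<And>i. i \<in> I \<Longrightarrow> closed_judgements (F i)"
  shows "closed_judgements (\<Union>i\<in>I. F i)"
  using assms unfolding closed_judgements_def by (blast intro: justified_mono)

lemma closed_judgements_Un: "closed_judgements F \<Longrightarrow> closed_judgements G \<Longrightarrow> closed_judgements (F \<union> G)"
  unfolding closed_judgements_def by (blast intro: justified_mono)

lemma closed_judgements_empty: "closed_judgements {}"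
  by (simp add: closed_judgements_def)

lemma closed_judgements_extend:
  assumes "closed_judgements F" and "justified (\<lambda>K. K \<in> F) p L y"
  shows "\<exists>F'. closed_judgements F' \<and> judgement p L y \<in> F'"
proof (intro exI conjI)
  show "closed_judgements (insert (judgement p L y) F)"
    using assms unfolding closed_judgements_def by (auto simp: judgement_def intro: justified_mono)
qed simp

lemma eval_rec_closed_judgements:
  "eval_rec f xs y \<Longrightarrow> \<exists>F. closed_judgements F \<and> judgement (recf_code f) (list_encode xs) y \<in> F"
proof (induction rule: eval_rec.induct)
  case (ev_comp xs gs ys f z)
  obtain F where F: "closed_judgements F" "judgement (recf_code f) (list_encode ys) z \<in> F"
    using ev_comp.IH by blast
  obtain Fs where Fs: "\<And>k. k < length gs \<Longrightarrow>
      closed_judgements (Fs k) \<and> judgement (recf_code (gs ! k)) (list_encode xs) (ys ! k) \<in> Fs k"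
    using ev_comp.IH(1) unfolding list_all2_conv_all_nth by metis
  define G where "G = F \<union> (\<Union>k<length gs. Fs k)"
  have "closed_judgements G"
    unfolding G_def using F Fs by (intro closed_judgements_Un closed_judgements_UN) auto
  moreover have "justified (\<lambda>K. K \<in> G) (recf_code (RComp f gs)) (list_encode xs) z"
    using F Fs list_all2_lengthD[OF ev_comp.IH(1)] by (auto simp: justified_recf_code G_def)
  ultimately show ?case by (rule closed_judgements_extend)
next
  case (ev_prim0 f xs y g)
  then obtain F where "closed_judgements F" "judgement (recf_code f) (list_encode xs) y \<in> F"
    by blast
  then show ?case by (intro closed_judgements_extend) (simp_all add: justified_recf_code)
next
  case (ev_primS f g n xs y z)
  then obtain F G where F: "closed_judgements F" "judgement (recf_code (RPrim f g)) (list_encode (n # xs)) y \<in> F"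
    and G: "closed_judgements G" "judgement (recf_code g) (list_encode (y # n # xs)) z \<in> G"
    by blast
  show ?case
    using F(2) G(2)
    by (intro closed_judgements_extend[OF closed_judgements_Un[OF F(1) G(1)]]) (auto simp: justified_recf_code)
next
  case (ev_mn f y xs)
  obtain F where F: "closed_judgements F" "judgement (recf_code f) (list_encode (y # xs)) 0 \<in> F"
    using ev_mn.IH(1) by blast
  obtain v Fs where Fs: "\<And>z. z < y \<Longrightarrow> v z > 0 \<and> closed_judgements (Fs z) \<and>
      judgement (recf_code f) (list_encode (z # xs)) (v z) \<in> Fs z"
    using ev_mn.IH(2) by metis
  define G where "G = F \<union> (\<Union>z<y. Fs z)"
  have "closed_judgements G"
    unfolding G_def using F Fs by (intro closed_judgements_Un closed_judgements_UN) auto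
  moreover have "justified (\<lambda>K. K \<in> G) (recf_code (RMn f)) (list_encode xs) y"
    using F Fs by (fastforce simp: justified_recf_code G_def)
  ultimately show ?case by (rule closed_judgements_extend)
qed (use closed_judgements_extend[OF closed_judgements_empty] in \<open>auto simp: justified_recf_code\<close>)

lemma certificate_set_encode: "closed_judgements F \<Longrightarrow> certificate (set_encode F)"
  by (simp add: closed_judgements_def certificate_def)

definition self_halts_within :: "nat \<Rightarrow> nat \<Rightarrow> bool" where
  "self_halts_within p t \<longleftrightarrow>
     (\<exists>S<t. certificate S \<and> (\<exists>y<S. judgement p (list_encode [p]) y \<in> set_decode S))"

definition self_halts :: "nat \<Rightarrow> bool" where
  "self_halts p \<longleftrightarrow> (\<exists>t. self_halts_within p t)"

lemma self_halts_within_mono: "self_halts_within p t \<Longrightarrow> t \<le> t' \<Longrightarrow> self_halts_within p t'"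
  unfolding self_halts_within_def using order.strict_trans2 by blast

lemma self_halts_recf_code: "self_halts (recf_code f) \<longleftrightarrow> (\<exists>y. eval_rec f [recf_code f] y)"
proof
  assume "self_halts (recf_code f)"
  then obtain S y where "certificate S" "judgement (recf_code f) (list_encode [recf_code f]) y \<in> set_decode S"
    unfolding self_halts_def self_halts_within_def by blast
  then show "\<exists>y. eval_rec f [recf_code f] y" by (blast dest: certificate_sound)
next
  assume "\<exists>y. eval_rec f [recf_code f] y"
  then obtain y F where F: "closed_judgements F"
    and "judgement (recf_code f) (list_encode [recf_code f]) y \<in> F"
    using eval_rec_closed_judgements by blast
  then have J: "judgement (recf_code f) (list_encode [recf_code f]) y \<in> set_decode (set_encode F)"
    by (simp add: closed_judgements_def)
  have "y < set_encode F"
    using le_judgement_value less_of_mem_set_decode[OF J] by (rule le_less_trans)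
  then have "self_halts_within (recf_code f) (Suc (set_encode F))"
    unfolding self_halts_within_def using certificate_set_encode[OF F] J by blast
  then show "self_halts (recf_code f)" unfolding self_halts_def by blast
qed

lemma rec_fn_judgement:
  "rec_fn n P \<Longrightarrow> rec_fn n F \<Longrightarrow> rec_fn n G \<Longrightarrow> rec_fn n (\<lambda>e. judgement (P e) (F e) (G e))"
  unfolding judgement_def by (intro rec_fn_npair)

text \<open>Judgements in \<open>set_decode S\<close> are below \<open>S\<close>, so the quantifiers in \<^const>\<open>justified\<close> can be
  bounded and checking a certificate is recursive.\<close>

lemma ex_judgement_input_bounded:
  "(\<exists>L. judgement p L y \<in> set_decode S \<and> Q L) \<longleftrightarrow> (\<exists>L<S. judgement p L y \<in> set_decode S \<and> Q L)"
  by (meson le_judgement_input less_of_mem_set_decode le_less_trans)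

lemma ex_judgement_value_bounded:
  "(\<exists>v. judgement p L v \<in> set_decode S \<and> Q v) \<longleftrightarrow> (\<exists>v<S. judgement p L v \<in> set_decode S \<and> Q v)"
  by (meson le_judgement_value less_of_mem_set_decode le_less_trans)

lemma rec_pred_justified:
  assumes "rec_fn n S" "rec_fn n P" "rec_fn n L" "rec_fn n Y"
  shows "rec_pred n (\<lambda>e. justified (\<lambda>K. K \<in> set_decode (S e)) (P e) (L e) (Y e))"
proof -
  have "rec_pred 4 (\<lambda>e. justified (\<lambda>K. K \<in> set_decode (e 0)) (e 1) (e 2) (e 3))"
    unfolding justified_def ex_judgement_input_bounded ex_judgement_value_bounded
    by (intro rec_intros rec_pred_mem_set_decode rec_fn_judgement rec_fn_npair rec_fn_nfst rec_fn_nsnd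
        rec_fn_ncons rec_fn_nhd rec_fn_ntl rec_fn_nnth rec_fn_nlength rec_fn_comp1[OF rec_fn_Suc])
      simp_all
  then show ?thesis
    using rec_pred_comp[of "[S, P, L, Y]" "\<lambda>e. justified (\<lambda>K. K \<in> set_decode (e 0)) (e 1) (e 2) (e 3)" n]
      assms by (auto simp: numeral_eq_Suc)
qed

lemma rec_pred_self_halts_within: "rec_pred 2 (\<lambda>e. self_halts_within (e 0) (e 1))"
  unfolding self_halts_within_def certificate_def list_encode_Cons list_encode.simps(1)
  by (intro rec_intros rec_pred_justified rec_pred_mem_set_decode rec_fn_judgement
      rec_fn_nfst rec_fn_nsnd rec_fn_ncons) simp_all

lemma eval_rec_deterministic: "eval_rec f xs y \<Longrightarrow> eval_rec f xs y' \<Longrightarrow> y = y'"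
proof (induction arbitrary: y' rule: eval_rec.induct)
  case (ev_comp xs gs ys f z)
  from ev_comp.prems obtain ys' where ys': "list_all2 (\<lambda>g y. eval_rec g xs y) gs ys'" "eval_rec f ys' y'"
    by (cases rule: eval_rec.cases) auto
  have "ys = ys'"
    using ys'(1) ev_comp.IH(1) by (auto simp: list_all2_conv_all_nth intro!: nth_equalityI)
  then show ?case using ev_comp.IH(2) ys'(2) by blast
next
  case (ev_prim0 f xs y g)
  from ev_prim0.prems have "eval_rec f xs y'" by (cases rule: eval_rec.cases) auto
  then show ?case using ev_prim0.IH by blast
next
  case (ev_primS f g n xs y z)
  from ev_primS.prems obtain y'' where "eval_rec (RPrim f g) (n # xs) y''" "eval_rec g (y'' # n # xs) y'"
    by (cases rule: eval_rec.cases) auto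
  then show ?case using ev_primS.IH by blast
next
  case (ev_mn f y xs)
  from ev_mn.prems have y': "eval_rec f (y' # xs) 0 \<and> (\<forall>z<y'. \<exists>v>0. eval_rec f (z # xs) v)"
    by (cases rule: eval_rec.cases) auto
  show ?case
  proof (rule linorder_cases[of y y'])
    assume "y < y'"
    then obtain v where "v > 0" "eval_rec f (y # xs) v" using y' by blast
    then show ?thesis using ev_mn.IH(1) by force
  next
    assume "y' < y"
    then obtain v where "v > 0" "\<forall>w. eval_rec f (y' # xs) w \<longrightarrow> v = w" using ev_mn.IH(2) by blast
    then show ?thesis using y' by force
  qed
qed (erule eval_rec.cases; simp)+

text \<open>Diagonalisation: the program \<open>d\<close> searches for a zero of the decision procedure on its
  input, so it halts on its own code exactly when it does not.\<close>

theorem not_rec_pred_self_halts: "\<not> rec_pred 1 (\<lambda>e. self_halts (e 0))"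
proof
  assume "rec_pred 1 (\<lambda>e. self_halts (e 0))"
  then obtain c where c: "\<And>x. eval_rec c [x] (if self_halts x then 1 else 0)"
    unfolding rec_pred_def rec_fn_def by (metis One_nat_def length_Cons list.size(3) nth_Cons_0)
  define d where "d = RMn (RComp c [RProj 1])"
  have dc: "eval_rec (RComp c [RProj 1]) [y, x] (if self_halts x then 1 else 0)" for x y
    using c by (intro ev_comp[where ys="[x]"]) (auto intro: ev_proj[of 1 "[y, x]", simplified])
  show False
  proof (cases "self_halts (recf_code d)")
    case True
    then obtain y where "eval_rec d [recf_code d] y" using self_halts_recf_code by blast
    then have "eval_rec (RComp c [RProj 1]) [y, recf_code d] 0"
      unfolding d_def by (cases rule: eval_rec.cases) auto
    then show False using eval_rec_deterministic[OF dc] True by fastforce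
  next
    case False
    then have "eval_rec (RMn (RComp c [RProj 1])) [recf_code d] 0"
      using dc[of 0 "recf_code d"] by (auto intro: ev_mn)
    then have "eval_rec d [recf_code d] 0" by (simp add: d_def)
    then show False using False self_halts_recf_code by blast
  qed
qed

section \<open>Computable reals separating the halting set from its complement\<close>

lemma recursive2_iff: "recursive2 f \<longleftrightarrow> rec_fn 2 (\<lambda>e. f (e 0) (e 1))"
proof
  assume "recursive2 f"
  then obtain c where c: "\<And>x y. eval_rec c [x, y] (f x y)" unfolding recursive2_def by blast
  have "eval_rec c xs (f (xs ! 0) (xs ! 1))" if "length xs = 2" for xs
    using that c by (auto simp: numeral_2_eq_2 length_Suc_conv)
  then show "rec_fn 2 (\<lambda>e. f (e 0) (e 1))" unfolding rec_fn_def by blast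
next
  assume "rec_fn 2 (\<lambda>e. f (e 0) (e 1))"
  then obtain c where "\<And>xs. length xs = 2 \<Longrightarrow> eval_rec c xs (f (xs ! 0) (xs ! 1))"
    unfolding rec_fn_def by blast
  then show "recursive2 f" unfolding recursive2_def by (metis length_Cons list.size(3) numeral_2_eq_2 nth_Cons_0 nth_Cons_Suc One_nat_def)
qed

lemma rec_fn_recursive2: "recursive2 f \<Longrightarrow> rec_fn n F \<Longrightarrow> rec_fn n G \<Longrightarrow> rec_fn n (\<lambda>e. f (F e) (G e))"
  unfolding recursive2_iff by (rule rec_fn_comp2)

lemma computable_real_seq_of_nat: "computable_real_seq (\<lambda>k. real c)"
proof -
  have "computable_rat_dseq (\<lambda>k j. of_nat c)"
    unfolding computable_rat_dseq_def recursive2_iff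
    by (rule exI[of _ "\<lambda>k j. c"], rule exI[of _ "\<lambda>k j. 1"], rule exI[of _ "\<lambda>k j. 0"])
       (simp add: rec_fn_const)
  then show ?thesis unfolding computable_real_seq_def by force
qed

lemma rec_pred_dyadic_less_rat_dseq:
  assumes "computable_rat_dseq r"
  shows "rec_pred 1 (\<lambda>e. of_nat p / 2 ^ j < r (e 0) j)"
proof -
  obtain a b s where rec: "recursive2 a" "recursive2 b" "recursive2 s"
    and r: "\<And>k j. b k j \<noteq> 0 \<and> r k j = (-1) ^ s k j * of_nat (a k j) / of_nat (b k j)"
    using assms unfolding computable_rat_dseq_def by blast
  have "of_nat p / 2 ^ j < r k j \<longleftrightarrow> (\<exists>h<Suc (s k j). s k j = 2 * h) \<and> p * b k j < a k j * 2 ^ j" for k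
  proof (cases "even (s k j)")
    case True
    have "of_nat p / 2 ^ j < (of_nat (a k j) / of_nat (b k j) :: rat) \<longleftrightarrow>
        of_nat (p * b k j) < (of_nat (a k j * 2 ^ j) :: rat)"
      using r[of k j] by (simp add: field_simps)
    then show ?thesis using True r[of k j] by (auto simp: even_iff_mod_2_eq_zero simp del: of_nat_mult)
  next
    case False
    have "r k j \<le> 0" "0 \<le> (of_nat p / 2 ^ j :: rat)" using False r[of k j] by simp_all
    then have "\<not> of_nat p / 2 ^ j < r k j" by linarith
    then show ?thesis using False by auto
  qed
  moreover have "rec_pred 1 (\<lambda>e. (\<exists>h<Suc (s (e 0) j). s (e 0) j = 2 * h) \<and> p * b (e 0) j < a (e 0) j * 2 ^ j)"
    by (intro rec_intros rec_fn_recursive2[OF rec(1)] rec_fn_recursive2[OF rec(2)]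
        rec_fn_recursive2[OF rec(3)] rec_fn_comp1[OF rec_fn_Suc]) simp_all
  ultimately show ?thesis by (auto intro: rec_pred_cong)
qed

lemma dyadic_in_gap:
  fixes l u :: real
  assumes "0 \<le> l" "l < u"
  obtains p j :: nat where "l + (1/2) ^ j < real p / 2 ^ j" "real p / 2 ^ j < u - (1/2) ^ j"
proof -
  obtain j :: nat where j: "(1/2) ^ j < (u - l) / 3"
    using real_arch_pow_inv[of "(u - l) / 3" "1/2"] assms by auto
  define p where "p = nat \<lfloor>l * 2 ^ j\<rfloor> + 2"
  have "real (nat \<lfloor>l * 2 ^ j\<rfloor>) = real_of_int \<lfloor>l * 2 ^ j\<rfloor>"
    using assms(1) by simp
  then have "l * 2 ^ j - 1 < real (nat \<lfloor>l * 2 ^ j\<rfloor>)" "real (nat \<lfloor>l * 2 ^ j\<rfloor>) \<le> l * 2 ^ j"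
    using real_of_int_floor_gt_diff_one[of "l * 2 ^ j"] of_int_floor_le[of "l * 2 ^ j"] by linarith+
  moreover have "real p = real (nat \<lfloor>l * 2 ^ j\<rfloor>) + 2" by (simp add: p_def)
  ultimately have "l * 2 ^ j + 1 < real p" "real p \<le> l * 2 ^ j + 2"
    by linarith+
  then have "(l * 2 ^ j + 1) / 2 ^ j < real p / 2 ^ j" "real p / 2 ^ j \<le> (l * 2 ^ j + 2) / 2 ^ j"
    by (simp_all add: divide_strict_right_mono divide_right_mono)
  then have "l + (1/2) ^ j < real p / 2 ^ j" "real p / 2 ^ j \<le> l + 2 * (1/2) ^ j"
    by (simp_all add: add_divide_distrib power_one_over)
  with j show ?thesis by (intro that[of j p]) simp_all
qed

text \<open>Decide \<open>P k\<close> by comparing a rational approximation of \<open>y k\<close> with a dyadic threshold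
  well inside the gap.\<close>

lemma rec_pred_of_computable_gap:
  assumes y: "computable_real_seq y" and gap: "0 \<le> l" "l < u"
    and above: "\<And>k. P k \<Longrightarrow> u \<le> y k" and below: "\<And>k. \<not> P k \<Longrightarrow> y k \<le> l"
  shows "rec_pred 1 (\<lambda>e. P (e 0))"
proof -
  obtain r where r: "computable_rat_dseq r" and approx: "\<And>k j. \<bar>of_rat (r k j) - y k\<bar> \<le> (1/2) ^ j"
    using y unfolding computable_real_seq_def by blast
  obtain p j :: nat where \<theta>: "l + (1/2) ^ j < real p / 2 ^ j" "real p / 2 ^ j < u - (1/2) ^ j"
    using dyadic_in_gap[OF gap] .
  have "P k \<longleftrightarrow> real p / 2 ^ j < of_rat (r k j)" for k
  proof
    assume "P k"
    then show "real p / 2 ^ j < of_rat (r k j)"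
      using above[of k] approx[of k j] \<theta>(2) unfolding abs_le_iff by linarith
  next
    assume "real p / 2 ^ j < of_rat (r k j)"
    then show "P k"
      using below[of k] approx[of k j] \<theta>(1) unfolding abs_le_iff by linarith
  qed
  also have "real p / 2 ^ j < of_rat (r k j) \<longleftrightarrow> of_nat p / 2 ^ j < r k j" for k
  proof -
    have "real p / 2 ^ j = of_rat (of_nat p / 2 ^ j)" by (simp add: of_rat_divide of_rat_power)
    then show ?thesis by (simp only: of_rat_less)
  qed
  finally show ?thesis
    using rec_pred_dyadic_less_rat_dseq[OF r, of p j] by (auto intro: rec_pred_cong)
qed

definition halting_time :: "nat \<Rightarrow> nat" where
  "halting_time p = (LEAST t. self_halts_within p t)"

text \<open>For \<open>M = 0\<close> the division below is by zero, so the sequence vanishes; all results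
  assume \<open>M \<ge> 1\<close>.\<close>

definition halting_seq :: "nat \<Rightarrow> nat \<Rightarrow> real" where
  "halting_seq M p = (if self_halts p then 1 / (real M * 2 ^ halting_time p) else 0)"

lemma self_halts_within_iff_halting_time:
  assumes "self_halts p"
  shows "self_halts_within p t \<longleftrightarrow> halting_time p \<le> t"
proof
  show "self_halts_within p t \<Longrightarrow> halting_time p \<le> t"
    unfolding halting_time_def by (rule Least_le)
  have "self_halts_within p (halting_time p)"
    using assms unfolding self_halts_def halting_time_def by (rule LeastI_ex)
  then show "halting_time p \<le> t \<Longrightarrow> self_halts_within p t"
    by (rule self_halts_within_mono)
qed

text \<open>The approximant counts the steps before \<open>p\<close> halts: it is exact once \<open>p\<close> has halted
  within \<open>j\<close> steps, and \<open>0\<close> before.\<close>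

definition halting_approx :: "nat \<Rightarrow> nat \<Rightarrow> nat \<Rightarrow> rat" where
  "halting_approx M p j = (if self_halts_within p j
     then 1 / of_nat (M * 2 ^ (\<Sum>t<j. if self_halts_within p t then 0 else 1)) else 0)"

lemma halting_approx_error:
  assumes M: "M \<ge> 1"
  shows "\<bar>of_rat (halting_approx M p j) - halting_seq M p\<bar> \<le> (1/2) ^ j"
proof (cases "self_halts_within p j")
  case True
  then have p: "self_halts p" unfolding self_halts_def by blast
  have "(\<Sum>t<j. if self_halts_within p t then 0 else 1::nat) = (\<Sum>t<halting_time p. 1)"
    using True by (intro sum.mono_neutral_cong_right) (auto simp: self_halts_within_iff_halting_time[OF p])
  then show ?thesis
    using True p by (simp add: halting_approx_def halting_seq_def of_rat_divide of_rat_mult of_rat_power)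
next
  case False
  show ?thesis
  proof (cases "self_halts p")
    case True
    then have "j < halting_time p" using False self_halts_within_iff_halting_time by auto
    then have "(2::real) ^ j \<le> 1 * 2 ^ halting_time p"
      by (simp add: power_increasing)
    also have "\<dots> \<le> real M * 2 ^ halting_time p"
      using M by (intro mult_right_mono) auto
    finally have "1 / (real M * 2 ^ halting_time p) \<le> 1 / 2 ^ j"
      by (simp add: frac_le)
    then show ?thesis using True False by (simp add: halting_approx_def halting_seq_def power_one_over)
  qed (simp add: halting_approx_def halting_seq_def False)
qed

lemma computable_halting_seq:
  assumes M: "M \<ge> 1"
  shows "computable_real_seq (halting_seq M)"
proof -
  define a where "a p j = (if self_halts_within p j then 1 else 0 :: nat)" for p j
  define b where "b p j = M * 2 ^ (\<Sum>t<j. if self_halts_within p t then 0 else 1)" for p j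
  have "recursive2 a"
    using rec_pred_self_halts_within unfolding recursive2_iff rec_pred_def a_def .
  moreover have "recursive2 b"
    unfolding recursive2_iff b_def
    by (intro rec_intros rec_pred_comp2[OF rec_pred_self_halts_within]) simp_all
  moreover have "recursive2 (\<lambda>p j. 0)"
    unfolding recursive2_iff by (rule rec_fn_const)
  moreover have "b p j \<noteq> 0 \<and> halting_approx M p j = (-1) ^ 0 * of_nat (a p j) / of_nat (b p j)" for p j
    using M by (simp add: halting_approx_def a_def b_def)
  ultimately have "computable_rat_dseq (halting_approx M)"
    unfolding computable_rat_dseq_def by blast
  then show ?thesis
    unfolding computable_real_seq_def using halting_approx_error[OF M] by blast
qed

lemma halting_seq_eq_0: "\<not> self_halts p \<Longrightarrow> halting_seq M p = 0"
  by (simp add: halting_seq_def)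

lemma halting_seq_pos: "M \<ge> 1 \<Longrightarrow> self_halts p \<Longrightarrow> 0 < halting_seq M p"
  by (simp add: halting_seq_def)

lemma halting_seq_nonneg: "0 \<le> halting_seq M p"
  by (simp add: halting_seq_def)

lemma halting_seq_le_1: "M \<ge> 1 \<Longrightarrow> halting_seq M p \<le> 1"
  by (auto simp: halting_seq_def one_le_power mult_ge1_I)

lemma inverse_halting_seq_ge: "M \<ge> 1 \<Longrightarrow> self_halts p \<Longrightarrow> real M \<le> inverse (halting_seq M p)"
  by (simp add: halting_seq_def)

lemma no_computable_gap_for_self_halts:
  assumes "computable_real_seq y" "0 \<le> l" "l < u"
    and "\<And>k. self_halts k \<Longrightarrow> u \<le> y k" "\<And>k. \<not> self_halts k \<Longrightarrow> y k \<le> l"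
  shows False
  using rec_pred_of_computable_gap[OF assms] not_rec_pred_self_halts by blast

section \<open>Pseudoinverses of matrices with two nonzero entries\<close>

lemma cadjoint_mult: "cadjoint (A ** B) = cadjoint B ** cadjoint A"
  by (simp add: cadjoint_def matrix_matrix_mult_def vec_eq_iff cnj_sum mult.commute)

lemma penrose_unique:
  fixes A :: "complex ^ 'n ^ 'm"
  assumes X: "A ** X ** A = A" "X ** A ** X = X" "cadjoint (A ** X) = A ** X" "cadjoint (X ** A) = X ** A"
    and Y: "A ** Y ** A = A" "Y ** A ** Y = Y" "cadjoint (A ** Y) = A ** Y" "cadjoint (Y ** A) = Y ** A"
  shows "X = Y"
proof -
  have "X = X ** (A ** X)" using X(2) by (simp add: matrix_mul_assoc)
  also have "\<dots> = X ** cadjoint (A ** X)" using X(3) by simp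
  also have "\<dots> = X ** (cadjoint X ** cadjoint (A ** Y ** A))" using Y(1) by (simp add: cadjoint_mult)
  also have "\<dots> = X ** (cadjoint X ** (cadjoint A ** cadjoint (A ** Y)))"
    by (simp add: cadjoint_mult matrix_mul_assoc)
  also have "\<dots> = X ** (cadjoint (A ** X) ** (A ** Y))" using Y(3)
    by (simp add: cadjoint_mult matrix_mul_assoc)
  also have "\<dots> = (X ** A ** X) ** A ** Y" using X(3) by (simp add: matrix_mul_assoc)
  also have "\<dots> = X ** A ** Y" using X(2) by simp
  finally have X_eq: "X = X ** A ** Y" .
  have "Y = (Y ** A) ** Y" using Y(2) by simp
  also have "\<dots> = cadjoint (Y ** A) ** Y" using Y(4) by simp
  also have "\<dots> = (cadjoint (A ** X ** A) ** cadjoint Y) ** Y" using X(1) by (simp add: cadjoint_mult)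
  also have "\<dots> = (cadjoint (X ** A) ** cadjoint A ** cadjoint Y) ** Y"
    by (simp add: cadjoint_mult matrix_mul_assoc)
  also have "\<dots> = ((X ** A) ** cadjoint (Y ** A)) ** Y" using X(4)
    by (simp add: cadjoint_mult matrix_mul_assoc)
  also have "\<dots> = X ** A ** (Y ** A ** Y)" using Y(4) by (simp add: matrix_mul_assoc)
  also have "\<dots> = X ** A ** Y" using Y(2) by simp
  finally show ?thesis using X_eq by simp
qed

lemma pinv_eqI:
  fixes A :: "complex ^ 'n ^ 'm"
  assumes "A ** X ** A = A" "X ** A ** X = X" "cadjoint (A ** X) = A ** X" "cadjoint (X ** A) = X ** A"
  shows "pinv A = X"
  unfolding pinv_def using assms penrose_unique by (intro the_equality) blast+

definition two_entry_mat :: "'m \<Rightarrow> 'n \<Rightarrow> complex \<Rightarrow> 'm \<Rightarrow> 'n \<Rightarrow> complex \<Rightarrow> complex ^ 'n ^ 'm" where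
  "two_entry_mat i1 j1 a i2 j2 b =
     (\<chi> i j. if i = i1 \<and> j = j1 then a else if i = i2 \<and> j = j2 then b else 0)"

lemma sum_two_points:
  fixes f :: "'a::finite \<Rightarrow> 'b::comm_monoid_add"
  assumes "a \<noteq> b" and "\<And>x. x \<noteq> a \<Longrightarrow> x \<noteq> b \<Longrightarrow> f x = 0"
  shows "sum f UNIV = f a + f b"
proof -
  have "sum f UNIV = sum f {a, b}" using assms(2) by (intro sum.mono_neutral_right) auto
  then show ?thesis using assms(1) by simp
qed

lemma sum_single_point:
  fixes f :: "'a::finite \<Rightarrow> 'b::comm_monoid_add"
  assumes "\<And>x. x \<noteq> a \<Longrightarrow> f x = 0"
  shows "sum f UNIV = f a"
  using assms by (subst sum.mono_neutral_right[of UNIV "{a}"]) auto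

lemma two_entry_mat_mult:
  assumes "i1 \<noteq> i2" "j1 \<noteq> j2" "k1 \<noteq> k2"
  shows "two_entry_mat i1 j1 a i2 j2 b ** two_entry_mat j1 k1 c j2 k2 d =
    two_entry_mat i1 k1 (a * c) i2 k2 (b * d)"
  unfolding vec_eq_iff matrix_matrix_mult_def two_entry_mat_def
  using assms by (simp add: sum_two_points[OF assms(2)])

lemma cadjoint_two_entry_mat:
  "cadjoint (two_entry_mat i1 j1 a i2 j2 b) = two_entry_mat j1 i1 (cnj a) j2 i2 (cnj b)"
  by (simp add: cadjoint_def two_entry_mat_def vec_eq_iff)

lemma pinv_two_entry_mat:
  assumes "i1 \<noteq> i2" "j1 \<noteq> j2"
  shows "pinv (two_entry_mat i1 j1 a i2 j2 b) = two_entry_mat j1 i1 (inverse a) j2 i2 (inverse b)"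
proof (rule pinv_eqI)
  have inv: "x * inverse x = (if x = 0 then 0 else 1)" "inverse x * x = (if x = 0 then 0 else 1)"
    for x :: complex
    by simp_all
  show "two_entry_mat i1 j1 a i2 j2 b ** two_entry_mat j1 i1 (inverse a) j2 i2 (inverse b) **
      two_entry_mat i1 j1 a i2 j2 b = two_entry_mat i1 j1 a i2 j2 b"
    using assms by (simp add: two_entry_mat_mult inv)
  show "two_entry_mat j1 i1 (inverse a) j2 i2 (inverse b) ** two_entry_mat i1 j1 a i2 j2 b **
      two_entry_mat j1 i1 (inverse a) j2 i2 (inverse b) = two_entry_mat j1 i1 (inverse a) j2 i2 (inverse b)"
    using assms by (simp add: two_entry_mat_mult inv)
  show "cadjoint (two_entry_mat i1 j1 a i2 j2 b ** two_entry_mat j1 i1 (inverse a) j2 i2 (inverse b)) =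
      two_entry_mat i1 j1 a i2 j2 b ** two_entry_mat j1 i1 (inverse a) j2 i2 (inverse b)"
    using assms by (simp add: two_entry_mat_mult cadjoint_two_entry_mat inv)
  show "cadjoint (two_entry_mat j1 i1 (inverse a) j2 i2 (inverse b) ** two_entry_mat i1 j1 a i2 j2 b) =
      two_entry_mat j1 i1 (inverse a) j2 i2 (inverse b) ** two_entry_mat i1 j1 a i2 j2 b"
    using assms by (simp add: two_entry_mat_mult cadjoint_two_entry_mat inv)
qed

lemma frob_norm_two_entry_mat:
  assumes "i1 \<noteq> i2"
  shows "frob_norm (two_entry_mat i1 j1 a i2 j2 b) = sqrt ((cmod a)\<^sup>2 + (cmod b)\<^sup>2)"
proof -
  have "(\<Sum>j\<in>UNIV. (cmod (two_entry_mat i1 j1 a i2 j2 b $ i $ j))\<^sup>2) =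
      (if i = i1 then (cmod a)\<^sup>2 else if i = i2 then (cmod b)\<^sup>2 else 0)" for i
    using assms by (simp add: two_entry_mat_def if_distrib[of "\<lambda>z. (cmod z)\<^sup>2"] cong: if_cong)
  then show ?thesis unfolding frob_norm_def using assms by (simp add: sum_two_points[OF assms])
qed

lemma cmod_le_frob_norm: "cmod (A $ i $ j) \<le> frob_norm A"
proof -
  have "(cmod (A $ i $ j))\<^sup>2 \<le> (\<Sum>j'\<in>UNIV. (cmod (A $ i $ j'))\<^sup>2)"
    by (rule member_le_sum) auto
  also have "\<dots> \<le> (\<Sum>i'\<in>UNIV. \<Sum>j'\<in>UNIV. (cmod (A $ i' $ j'))\<^sup>2)"
    by (rule member_le_sum[where f="\<lambda>i'. \<Sum>j'\<in>UNIV. (cmod (A $ i' $ j'))\<^sup>2"]) (auto intro: sum_nonneg)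
  finally show ?thesis unfolding frob_norm_def by (simp add: real_le_rsqrt)
qed

lemma norm_axis: "norm (axis i c) = norm c"
  unfolding norm_vec_def L2_set_def by (subst sum_single_point[of i]) (auto simp: axis_def)

lemma two_entry_mat_mult_axis:
  assumes "j1 \<noteq> j2"
  shows "two_entry_mat i1 j1 a i2 j2 b *v axis j2 c = axis i2 (b * c)"
  unfolding vec_eq_iff matrix_vector_mult_def
  using assms by (subst sum_single_point[of j2]) (auto simp: axis_def two_entry_mat_def)

lemma lsq_residual_two_entry_mat_solvable:
  assumes "j1 \<noteq> j2" "b \<noteq> 0"
  shows "(INF x :: complex ^ 'n. norm (two_entry_mat i1 j1 a i2 j2 b *v x - axis i2 1)) = 0"
proof (rule antisym)
  have "two_entry_mat i1 j1 a i2 j2 b *v axis j2 (inverse b) = axis i2 1"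
    using assms by (simp add: two_entry_mat_mult_axis)
  then show "(INF x :: complex ^ 'n. norm (two_entry_mat i1 j1 a i2 j2 b *v x - axis i2 1)) \<le> 0"
    by (intro cINF_lower2[where x="axis j2 (inverse b)"]) (auto intro: bdd_belowI[of _ 0])
qed (intro cINF_greatest; simp)

lemma lsq_residual_two_entry_mat_unsolvable:
  fixes i1 i2 :: "'m::finite" and j1 j2 :: "'n::finite"
  assumes "i1 \<noteq> i2"
  shows "(INF x :: complex ^ 'n. norm (two_entry_mat i1 j1 a i2 j2 0 *v x - axis i2 1)) = 1"
proof (rule antisym)
  show "(INF x :: complex ^ 'n. norm (two_entry_mat i1 j1 a i2 j2 0 *v x - axis i2 1)) \<le> 1"
    by (intro cINF_lower2[where x=0]) (auto simp: norm_axis intro: bdd_belowI[of _ 0])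
  have "1 \<le> norm (two_entry_mat i1 j1 a i2 j2 0 *v x - axis i2 1)" for x :: "complex ^ 'n"
  proof -
    have "(two_entry_mat i1 j1 a i2 j2 0 *v x - axis i2 1) $ i2 = -1"
      using assms by (simp add: matrix_vector_mult_def two_entry_mat_def axis_def)
    then show ?thesis using Finite_Cartesian_Product.norm_nth_le[of _ i2] by (metis norm_minus_cancel norm_one)
  qed
  then show "1 \<le> (INF x :: complex ^ 'n. norm (two_entry_mat i1 j1 a i2 j2 0 *v x - axis i2 1))"
    by (intro cINF_greatest) auto
qed

section \<open>Reductions from the halting problem\<close>

lemma computable_complex_seq_of_real:
  "computable_real_seq y \<Longrightarrow> computable_complex_seq (\<lambda>k. complex_of_real (y k))"
  unfolding computable_complex_seq_def using computable_real_seq_of_nat[of 0] by simp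

lemma computable_complex_seq_of_nat: "computable_complex_seq (\<lambda>k. of_nat c)"
  using computable_complex_seq_of_real[OF computable_real_seq_of_nat[of c]] by simp

lemma computable_vec_seq_axis: "computable_vec_seq (\<lambda>k. axis i 1)"
  unfolding computable_vec_seq_def axis_def
  using computable_complex_seq_of_nat[of 0] computable_complex_seq_of_nat[of 1] by auto

lemma no_computable_approximation_of_blowup:
  assumes computable: "\<And>M. M \<ge> 1 \<Longrightarrow> computable_real_seq (y M)"
    and approx: "\<And>M k. M \<ge> 1 \<Longrightarrow> \<bar>f M k - y M k\<bar> \<le> C"
    and halting: "\<And>M k. M \<ge> 1 \<Longrightarrow> self_halts k \<Longrightarrow> real M \<le> f M k"
    and non_halting: "\<And>M k. M \<ge> 1 \<Longrightarrow> \<not> self_halts k \<Longrightarrow> f M k \<le> 1"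
  shows False
proof -
  have "0 \<le> C" using approx[of 1 0] by simp
  obtain M :: nat where M: "2 * C + 2 < real M" using reals_Archimedean2 by blast
  then have "M \<ge> 1" using \<open>0 \<le> C\<close> by linarith
  show False
  proof (rule no_computable_gap_for_self_halts[OF computable[OF \<open>M \<ge> 1\<close>]])
    show "0 \<le> 1 + C" "1 + C < real M - C" using \<open>0 \<le> C\<close> M by linarith+
    show "real M - C \<le> y M k" if "self_halts k" for k
      using approx[OF \<open>M \<ge> 1\<close>, of k] halting[OF \<open>M \<ge> 1\<close> that] by linarith
    show "y M k \<le> 1 + C" if "\<not> self_halts k" for k
      using approx[OF \<open>M \<ge> 1\<close>, of k] non_halting[OF \<open>M \<ge> 1\<close> that] by linarith
  qed
qed

lemma le_sqrt_one_plus_square: "x \<le> sqrt (1 + x\<^sup>2)"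
  by (simp add: real_le_rsqrt)

context
  fixes i1 i2 :: "'m::finite" and j1 j2 :: "'n::finite"
  assumes rows: "i1 \<noteq> i2" and cols: "j1 \<noteq> j2"
begin

definition halting_mat :: "nat \<Rightarrow> nat \<Rightarrow> complex ^ 'n ^ 'm" where
  "halting_mat M k = two_entry_mat i1 j1 1 i2 j2 (of_real (halting_seq M k))"

lemma computable_halting_mat:
  assumes "M \<ge> 1"
  shows "computable_mat_seq (halting_mat M)"
  unfolding computable_mat_seq_def
proof (intro allI)
  fix i j
  show "computable_complex_seq (\<lambda>k. halting_mat M k $ i $ j)"
    using computable_complex_seq_of_nat[of 0] computable_complex_seq_of_nat[of 1]
      computable_complex_seq_of_real[OF computable_halting_seq[OF assms]] rows
    by (cases "i = i1 \<and> j = j1"; cases "i = i2 \<and> j = j2") (auto simp: halting_mat_def two_entry_mat_def)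
qed

lemma frob_norm_halting_mat: "frob_norm (halting_mat M k) = sqrt (1 + (halting_seq M k)\<^sup>2)"
  by (simp add: halting_mat_def frob_norm_two_entry_mat[OF rows])

lemma frob_norm_halting_mat_le: "M \<ge> 1 \<Longrightarrow> frob_norm (halting_mat M k) \<le> sqrt 2"
  using halting_seq_nonneg[of M k] halting_seq_le_1[of M k] by (simp add: frob_norm_halting_mat power_le_one)

lemma pinv_halting_mat:
  "pinv (halting_mat M k) = two_entry_mat j1 i1 1 j2 i2 (of_real (inverse (halting_seq M k)))"
  by (simp add: halting_mat_def pinv_two_entry_mat[OF rows cols])

lemma frob_norm_pinv_halting_mat:
  "frob_norm (pinv (halting_mat M k)) = sqrt (1 + (inverse (halting_seq M k))\<^sup>2)"
  using halting_seq_nonneg[of M k]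
  by (simp add: pinv_halting_mat frob_norm_two_entry_mat[OF cols] del: of_real_inverse)

lemma pinv_halting_mat_mult_axis:
  "pinv (halting_mat M k) *v axis i2 1 = axis j2 (of_real (inverse (halting_seq M k)))"
  by (simp add: pinv_halting_mat two_entry_mat_mult_axis[OF rows] del: of_real_inverse)

lemma pinv_approx_not_BM_computable:
  fixes g :: "complex ^ 'n ^ 'm \<Rightarrow> complex ^ 'm ^ 'n"
  assumes approx: "\<forall>A. frob_norm A \<le> sqrt 2 \<longrightarrow> frob_norm (pinv A - g A) \<le> C"
  shows "\<not> BM_computable_mat_mat g"
proof
  assume g: "BM_computable_mat_mat g"
  show False
  proof (rule no_computable_approximation_of_blowup)
    fix M k :: nat assume M: "M \<ge> 1"
    show "computable_real_seq (\<lambda>k. Re (g (halting_mat M k) $ j2 $ i2))"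
      using g computable_halting_mat[OF M]
      unfolding BM_computable_mat_mat_def computable_mat_seq_def computable_complex_seq_def by blast
    have "\<bar>Re ((pinv (halting_mat M k) - g (halting_mat M k)) $ j2 $ i2)\<bar> \<le> C"
      using abs_Re_le_cmod cmod_le_frob_norm approx frob_norm_halting_mat_le[OF M] by (meson order_trans)
    then show "\<bar>inverse (halting_seq M k) - Re (g (halting_mat M k) $ j2 $ i2)\<bar> \<le> C"
      using rows cols by (simp add: pinv_halting_mat two_entry_mat_def del: of_real_inverse)
  qed (simp_all add: inverse_halting_seq_ge halting_seq_eq_0)
qed

lemma pinv_frob_norm_approx_not_BM_computable:
  fixes g :: "complex ^ 'n ^ 'm \<Rightarrow> real"
  assumes approx: "\<forall>A. frob_norm A \<le> sqrt 2 \<longrightarrow> \<bar>frob_norm (pinv A) - g A\<bar> \<le> C"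
  shows "\<not> BM_computable_mat_real g"
proof
  assume g: "BM_computable_mat_real g"
  show False
  proof (rule no_computable_approximation_of_blowup)
    fix M k :: nat assume M: "M \<ge> 1"
    show "computable_real_seq (\<lambda>k. g (halting_mat M k))"
      using g computable_halting_mat[OF M] unfolding BM_computable_mat_real_def by blast
    show "\<bar>frob_norm (pinv (halting_mat M k)) - g (halting_mat M k)\<bar> \<le> C"
      using approx frob_norm_halting_mat_le[OF M] by blast
    show "real M \<le> frob_norm (pinv (halting_mat M k))" if "self_halts k"
      using inverse_halting_seq_ge[OF M that] le_sqrt_one_plus_square[of "inverse (halting_seq M k)"]
      by (simp add: frob_norm_pinv_halting_mat)
  qed (simp add: frob_norm_pinv_halting_mat halting_seq_eq_0)
qed

lemma lsq_residual_approx_not_BM_computable: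
  fixes \<Psi> :: "complex ^ 'n ^ 'm \<Rightarrow> complex ^ 'm \<Rightarrow> real"
  assumes "c < 1/4"
    and approx: "\<forall>A b. frob_norm A \<le> sqrt 2 \<longrightarrow> norm b \<le> sqrt 2 \<longrightarrow>
      \<bar>(INF x :: complex ^ 'n. norm (A *v x - b)) - \<Psi> A b\<bar> \<le> c"
  shows "\<not> BM_computable_matvec_real \<Psi>"
proof
  assume \<Psi>: "BM_computable_matvec_real \<Psi>"
  define y where "y k = \<Psi> (halting_mat 1 k) (axis i2 1)" for k
  have residual: "\<bar>(INF x :: complex ^ 'n. norm (halting_mat 1 k *v x - axis i2 1)) - y k\<bar> \<le> c" for k
    using approx frob_norm_halting_mat_le[of 1 k] by (simp add: y_def norm_axis)
  have "rec_pred 1 (\<lambda>e. \<not> self_halts (e 0))"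
  proof (rule rec_pred_of_computable_gap)
    show "computable_real_seq y"
      using \<Psi> computable_halting_mat[of 1] computable_vec_seq_axis[of i2]
      unfolding BM_computable_matvec_real_def y_def by blast
    show "0 \<le> c" using residual[of 0] by linarith
    show "c < 1 - c" using \<open>c < 1/4\<close> by simp
    show "1 - c \<le> y k" if "\<not> self_halts k" for k
      using residual[of k] lsq_residual_two_entry_mat_unsolvable[OF rows, of j1 1 j2]
      by (simp add: halting_mat_def halting_seq_eq_0[OF that])
    show "y k \<le> c" if "\<not> \<not> self_halts k" for k
    proof -
      have "complex_of_real (halting_seq 1 k) \<noteq> 0"
        using halting_seq_pos[of 1 k] that by simp
      then show ?thesis
        using residual[of k] lsq_residual_two_entry_mat_solvable[OF cols, of _ i1 1 i2]
        by (simp add: halting_mat_def)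
    qed
  qed
  then show False using rec_pred_Not not_rec_pred_self_halts by fastforce
qed

lemma lsq_solution_approx_not_BM_computable:
  fixes \<Psi> :: "complex ^ 'n ^ 'm \<Rightarrow> complex ^ 'm \<Rightarrow> complex ^ 'n"
  assumes approx: "\<forall>A b. frob_norm A \<le> sqrt 2 \<longrightarrow> norm b \<le> sqrt 2 \<longrightarrow> norm (pinv A *v b - \<Psi> A b) \<le> C"
  shows "\<not> BM_computable_matvec_vec \<Psi>"
proof
  assume \<Psi>: "BM_computable_matvec_vec \<Psi>"
  show False
  proof (rule no_computable_approximation_of_blowup)
    fix M k :: nat assume M: "M \<ge> 1"
    have "computable_vec_seq (\<lambda>k. \<Psi> (halting_mat M k) (axis i2 1))"
      using \<Psi> computable_halting_mat[OF M] computable_vec_seq_axis[of i2]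
      unfolding BM_computable_matvec_vec_def by blast
    then show "computable_real_seq (\<lambda>k. Re (\<Psi> (halting_mat M k) (axis i2 1) $ j2))"
      by (simp add: computable_vec_seq_def computable_complex_seq_def)
    have "norm (pinv (halting_mat M k) *v axis i2 1 - \<Psi> (halting_mat M k) (axis i2 1)) \<le> C"
      using approx frob_norm_halting_mat_le[OF M] by (simp add: norm_axis)
    then have "\<bar>Re ((pinv (halting_mat M k) *v axis i2 1 - \<Psi> (halting_mat M k) (axis i2 1)) $ j2)\<bar> \<le> C"
      by (meson abs_Re_le_cmod Finite_Cartesian_Product.norm_nth_le order_trans)
    then show "\<bar>inverse (halting_seq M k) - Re (\<Psi> (halting_mat M k) (axis i2 1) $ j2)\<bar> \<le> C"
      by (simp add: pinv_halting_mat_mult_axis del: of_real_inverse)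
  qed (simp_all add: inverse_halting_seq_ge halting_seq_eq_0)
qed

lemma lsq_solution_norm_approx_not_BM_computable:
  fixes \<Psi> :: "complex ^ 'n ^ 'm \<Rightarrow> complex ^ 'm \<Rightarrow> real"
  assumes approx: "\<forall>A b. frob_norm A \<le> sqrt 2 \<longrightarrow> norm b \<le> sqrt 2 \<longrightarrow> \<bar>norm (pinv A *v b) - \<Psi> A b\<bar> \<le> C"
  shows "\<not> BM_computable_matvec_real \<Psi>"
proof
  assume \<Psi>: "BM_computable_matvec_real \<Psi>"
  show False
  proof (rule no_computable_approximation_of_blowup)
    fix M k :: nat assume M: "M \<ge> 1"
    show "computable_real_seq (\<lambda>k. \<Psi> (halting_mat M k) (axis i2 1))"
      using \<Psi> computable_halting_mat[OF M] computable_vec_seq_axis[of i2]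
      unfolding BM_computable_matvec_real_def by blast
    show "\<bar>norm (pinv (halting_mat M k) *v axis i2 1) - \<Psi> (halting_mat M k) (axis i2 1)\<bar> \<le> C"
      using approx frob_norm_halting_mat_le[OF M] by (simp add: norm_axis)
  qed (use halting_seq_nonneg in \<open>simp_all add: pinv_halting_mat_mult_axis norm_axis
      inverse_halting_seq_ge halting_seq_eq_0 del: of_real_inverse\<close>)
qed

lemma condition_number_approx_not_BM_computable:
  fixes \<kappa> :: "complex ^ 'n ^ 'm \<Rightarrow> real"
  assumes approx: "\<forall>A. frob_norm A \<le> sqrt 2 \<longrightarrow> \<bar>frob_norm A * frob_norm (pinv A) - \<kappa> A\<bar> \<le> C"
  shows "\<not> BM_computable_mat_real \<kappa>"
proof
  assume \<kappa>: "BM_computable_mat_real \<kappa>"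
  show False
  proof (rule no_computable_approximation_of_blowup)
    fix M k :: nat assume M: "M \<ge> 1"
    show "computable_real_seq (\<lambda>k. \<kappa> (halting_mat M k))"
      using \<kappa> computable_halting_mat[OF M] unfolding BM_computable_mat_real_def by blast
    show "\<bar>frob_norm (halting_mat M k) * frob_norm (pinv (halting_mat M k)) - \<kappa> (halting_mat M k)\<bar> \<le> C"
      using approx frob_norm_halting_mat_le[OF M] by blast
    show "real M \<le> frob_norm (halting_mat M k) * frob_norm (pinv (halting_mat M k))" if "self_halts k"
    proof -
      have "real M \<le> 1 * inverse (halting_seq M k)"
        using inverse_halting_seq_ge[OF M that] by simp
      also have "\<dots> \<le> sqrt (1 + (halting_seq M k)\<^sup>2) * sqrt (1 + (inverse (halting_seq M k))\<^sup>2)"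
        using le_sqrt_one_plus_square[of "inverse (halting_seq M k)"]
        by (intro mult_mono) (auto simp: halting_seq_nonneg)
      finally show ?thesis by (simp add: frob_norm_halting_mat frob_norm_pinv_halting_mat)
    qed
  qed (simp add: frob_norm_halting_mat frob_norm_pinv_halting_mat halting_seq_eq_0)
qed

end

lemma two_distinct_elements:
  assumes "CARD('a::finite) \<ge> 2"
  obtains a b :: "'a::finite" where "a \<noteq> b"
  using assms card_le_Suc0_iff_eq[of "UNIV :: 'a set"] by fastforce

theorem theorem3p3:
  assumes "CARD('m::finite) \<ge> 2" and "CARD('n::finite) \<ge> 2"
  shows
   "(\<forall>g :: complex ^ 'n ^ 'm \<Rightarrow> complex ^ 'm ^ 'n.
       (\<exists>C. \<forall>A. frob_norm A \<le> sqrt 2 \<longrightarrow> frob_norm (pinv A - g A) \<le> C)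
       \<longrightarrow> \<not> BM_computable_mat_mat g)
  \<and> (\<forall>g :: complex ^ 'n ^ 'm \<Rightarrow> real.
       (\<exists>C. \<forall>A. frob_norm A \<le> sqrt 2 \<longrightarrow> \<bar>frob_norm (pinv A) - g A\<bar> \<le> C)
       \<longrightarrow> \<not> BM_computable_mat_real g)
  \<and> (\<forall>\<Psi> :: complex ^ 'n ^ 'm \<Rightarrow> complex ^ 'm \<Rightarrow> real.
       (\<exists>c < 1/4. \<forall>A b. frob_norm A \<le> sqrt 2 \<longrightarrow> norm b \<le> sqrt 2 \<longrightarrow>
            \<bar>(INF x :: complex ^ 'n. norm (A *v x - b)) - \<Psi> A b\<bar> \<le> c)
       \<longrightarrow> \<not> BM_computable_matvec_real \<Psi>)
  \<and> (\<forall>\<Psi> :: complex ^ 'n ^ 'm \<Rightarrow> complex ^ 'm \<Rightarrow> complex ^ 'n.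
       (\<exists>C. \<forall>A b. frob_norm A \<le> sqrt 2 \<longrightarrow> norm b \<le> sqrt 2 \<longrightarrow>
            norm (pinv A *v b - \<Psi> A b) \<le> C)
       \<longrightarrow> \<not> BM_computable_matvec_vec \<Psi>)
  \<and> (\<forall>\<Psi> :: complex ^ 'n ^ 'm \<Rightarrow> complex ^ 'm \<Rightarrow> real.
       (\<exists>C. \<forall>A b. frob_norm A \<le> sqrt 2 \<longrightarrow> norm b \<le> sqrt 2 \<longrightarrow>
            \<bar>norm (pinv A *v b) - \<Psi> A b\<bar> \<le> C)
       \<longrightarrow> \<not> BM_computable_matvec_real \<Psi>)
  \<and> (\<forall>\<kappa> :: complex ^ 'n ^ 'm \<Rightarrow> real.
       (\<exists>C. \<forall>A. frob_norm A \<le> sqrt 2 \<longrightarrow> \<bar>frob_norm A * frob_norm (pinv A) - \<kappa> A\<bar> \<le> C)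
       \<longrightarrow> \<not> BM_computable_mat_real \<kappa>)"
proof -
  obtain i1 i2 :: 'm where rows: "i1 \<noteq> i2" using two_distinct_elements[OF assms(1)] .
  obtain j1 j2 :: 'n where cols: "j1 \<noteq> j2" using two_distinct_elements[OF assms(2)] .
  show ?thesis
    using pinv_approx_not_BM_computable[OF rows cols]
      pinv_frob_norm_approx_not_BM_computable[OF rows cols]
      lsq_residual_approx_not_BM_computable[OF rows cols]
      lsq_solution_approx_not_BM_computable[OF rows cols]
      lsq_solution_norm_approx_not_BM_computable[OF rows cols]
      condition_number_approx_not_BM_computable[OF rows cols]
    by blast
qed

end
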